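(* Let $(V_\iota)_{\iota\in\mathbb N}$ be a sequence of bounded $C^1$-submanifolds of $\mathbb R^n$ of dimension $p$, each $\eta$-bounded for a fixed $\eta>0$. Assume that both $\lim_\iota V_\iota$ and $\lim_\iota\operatorname{fr}V_\iota$ exist, and that there is $\nu\in\mathbb N$ such that for every $\iota$ and every open box $U\subseteq\mathbb R^n$ the set $V_\iota\cap U$ has at most $\nu$ connected components. Then for every $x\in\lim_\iota V_\iota\setminus\lim_\iota\operatorname{fr}V_\iota$ there are a box $U\subseteq\mathbb R^n$ containing $x$ and $p\eta$-Lipschitz functions $f_1,\dots,f_\nu:\Pi_p(U)\to\mathbb R^{n-p}$ such that $\big(\lim_\iota V_\iota\big)\cap U=(\operatorname{gr}f_1\cap U)\cup\cdots\cup(\operatorname{gr}f_\nu\cap U)$.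
   Context: For $x\in\mathbb R^k$, $|x|=\max_i|x_i|$, used for Lipschitz constants. A box is a product of nonempty open intervals. A $p$-dimensional submanifold $V\subseteq\mathbb R^n$ is $\eta$-bounded if for every $x\in V$ there is a real $(n-p)\times p$ matrix $L$ with all entries of absolute value $\le\eta$ such that $T_xV=\{(u,Lu):u\in\mathbb R^p\}$. $\operatorname{fr}V=\operatorname{cl}V\setminus V$. For bounded sets $A_\iota\subseteq\mathbb R^n$, $\lim_\iota A_\iota=C$ means the closures $\operatorname{cl}A_\iota$ converge to the compact set $C$ in the Hausdorff metric on compact subsets of $\mathbb R^n$ (with $\emptyset$ included, at distance $\infty$ from nonempty sets). $\Pi_p$ is projection onto the first $p$ coordinates and $\operatorname{gr}f$ the graph of $f$. *)

theory Defs
  imports "HOL-Analysis.Analysis"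
begin

text \<open>R^n is modelled as (real,'n) vec for a finite linearly ordered index type 'n
  (so n = CARD('n)); the "first p coordinates" are the p smallest indices.
  R^p and R^(n-p) are modelled as the coordinate subspaces of (real,'n) vec.\<close>

definition firstp :: "nat \<Rightarrow> ('n::{finite,linorder}) set" where
  "firstp p = {i. card {j. j < i} < p}"

definition projp :: "nat \<Rightarrow> (real,'n) vec \<Rightarrow> (real,'n::{finite,linorder}) vec" where
  "projp p x = (\<chi> i. if i \<in> firstp p then x$i else 0)"

definition maxnorm :: "(real,'n::finite) vec \<Rightarrow> real" where
  "maxnorm x = Max (range (\<lambda>i. \<bar>x$i\<bar>))"

definition C1_on :: "((real,'n::finite) vec) set \<Rightarrow> ((real,'n) vec \<Rightarrow> (real,'n) vec) \<Rightarrow> bool" where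
  "C1_on W f \<longleftrightarrow> (\<exists>f'. (\<forall>y\<in>W. (f has_derivative f' y) (at y))
                         \<and> continuous_on W (\<lambda>y. matrix (f' y)))"

definition C1_submanifold :: "nat \<Rightarrow> ((real,'n::{finite,linorder}) vec) set \<Rightarrow> bool" where
  "C1_submanifold p V \<longleftrightarrow>
     (\<forall>x\<in>V. \<exists>W \<Phi> \<Psi>. open W \<and> x \<in> W \<and> inj_on \<Phi> W \<and> open (\<Phi> ` W)
        \<and> C1_on W \<Phi> \<and> C1_on (\<Phi> ` W) \<Psi> \<and> (\<forall>y\<in>W. \<Psi> (\<Phi> y) = y)
        \<and> \<Phi> ` (V \<inter> W) = \<Phi> ` W \<inter> {z. \<forall>j. j \<notin> firstp p \<longrightarrow> z$j = 0})"

definition tangent_space :: "((real,'n::finite) vec) set \<Rightarrow> (real,'n) vec \<Rightarrow> ((real,'n) vec) set" where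
  "tangent_space V x = {v. \<exists>\<gamma> e. e > 0 \<and> (\<forall>t\<in>{-e<..<e}. \<gamma> t \<in> V) \<and> \<gamma> 0 = x
                         \<and> (\<gamma> has_vector_derivative v) (at 0)}"

definition eta_bounded :: "nat \<Rightarrow> real \<Rightarrow> ((real,'n::{finite,linorder}) vec) set \<Rightarrow> bool" where
  "eta_bounded p \<eta> V \<longleftrightarrow>
     (\<forall>x\<in>V. \<exists>L :: 'n \<Rightarrow> 'n \<Rightarrow> real.
        (\<forall>j i. j \<notin> firstp p \<longrightarrow> i \<in> firstp p \<longrightarrow> \<bar>L j i\<bar> \<le> \<eta>) \<and>
        tangent_space V x = {v. \<forall>j. j \<notin> firstp p \<longrightarrow> v$j = (\<Sum>i\<in>firstp p. L j i * v$i)})"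

definition fr :: "('a::topological_space) set \<Rightarrow> 'a set" where
  "fr V = closure V - V"

definition hdist :: "('a::metric_space) set \<Rightarrow> 'a set \<Rightarrow> real" where
  "hdist A B = max (SUP a\<in>A. infdist a B) (SUP b\<in>B. infdist b A)"

text \<open>lim A = C: closures converge to compact C in the Hausdorff metric, where the
  empty set is at distance infinity from nonempty sets.\<close>
definition hlim :: "(nat \<Rightarrow> ('a::metric_space) set) \<Rightarrow> 'a set \<Rightarrow> bool" where
  "hlim A C \<longleftrightarrow> (\<forall>i. bounded (A i)) \<and> compact C \<and>
     ((C = {} \<and> (\<forall>\<^sub>F i in sequentially. A i = {})) \<or>
      (C \<noteq> {} \<and> (\<forall>\<^sub>F i in sequentially. A i \<noteq> {}) \<and>
        (\<lambda>i. hdist (closure (A i)) C) \<longlonglongrightarrow> 0))"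

definition lip_map :: "nat \<Rightarrow> real \<Rightarrow> ((real,'n::{finite,linorder}) vec) set \<Rightarrow> ((real,'n) vec \<Rightarrow> (real,'n) vec) \<Rightarrow> bool" where
  "lip_map p K D f \<longleftrightarrow> (\<forall>u\<in>D. \<forall>i\<in>firstp p. f u $ i = 0) \<and>
     (\<forall>u\<in>D. \<forall>v\<in>D. maxnorm (f u - f v) \<le> K * maxnorm (u - v))"

text \<open>gr f = {(u, f u) : u \<in> D}.\<close>
definition graph :: "((real,'n::finite) vec) set \<Rightarrow> ((real,'n) vec \<Rightarrow> (real,'n) vec) \<Rightarrow> ((real,'n) vec) set" where
  "graph D f = {u + f u | u. u \<in> D}"

end

(* Near each of its points a p-dimensional eta-bounded C^1 submanifold is the graph, over the
   first p coordinates, of a (p eta)-Lipschitz map, and on compact pieces these charts have a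
   uniform size. Away from the limit of the frontiers, V_iota has no frontier near x for large
   iota, so every sheet of V_iota through a small box around x continues to a Lipschitz graph
   over the whole base of a box twice as wide; such a graph is a connected component of V_iota
   in that box, hence there are at most nu of them. By Arzela-Ascoli a subsequence of these nu
   Lipschitz maps converges, and the Hausdorff limit inside the small box is the union of the
   limit graphs. *)

theory Submission
  imports Defs "HOL-Complex_Analysis.Great_Picard"
begin

lemma infnorm_eq_Max_cart: "infnorm (x::real^'n) = Max (range (\<lambda>i. \<bar>x$i\<bar>))"
proof -
  have "{\<bar>x$i\<bar> |i. i \<in> UNIV} = range (\<lambda>i. \<bar>x$i\<bar>)" by auto
  then show ?thesis unfolding infnorm_cart by (simp add: cSup_eq_Max)
qed

lemma maxnorm_eq_infnorm: "maxnorm x = infnorm x"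
  unfolding maxnorm_def infnorm_eq_Max_cart ..

lemma infnorm_le_iff_cart: "infnorm (x::real^'n) \<le> c \<longleftrightarrow> (\<forall>i. \<bar>x$i\<bar> \<le> c)"
  unfolding infnorm_eq_Max_cart by simp

lemma infnorm_less_iff_cart: "infnorm (x::real^'n) < c \<longleftrightarrow> (\<forall>i. \<bar>x$i\<bar> < c)"
  unfolding infnorm_eq_Max_cart by simp

lemma norm_le_sqrt_card_infnorm: "norm (x::real^'n) \<le> sqrt (real CARD('n)) * infnorm x"
  using norm_le_infnorm[of x] by simp

lemma open_contains_infnorm_ball:
  fixes S :: "(real^'n) set"
  assumes "open S" "x \<in> S"
  obtains e where "e > 0" "\<And>z. infnorm (z - x) < e \<Longrightarrow> z \<in> S"
proof -
  obtain d where d: "d > 0" "ball x d \<subseteq> S" using assms open_contains_ball by blast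
  let ?c = "sqrt (real CARD('n))"
  show thesis
  proof
    show "d / ?c > 0" using d by simp
    fix z assume "infnorm (z - x) < d / ?c"
    then have "?c * infnorm (z - x) < d" by (simp add: field_simps)
    then have "dist z x < d" using norm_le_sqrt_card_infnorm[of "z - x"] by (simp add: dist_norm)
    then show "z \<in> S" using d by (auto simp: dist_commute)
  qed
qed

lemma convex_infnorm_le: "convex {u::real^'n. infnorm (u - c) \<le> r}"
proof (rule convexI)
  fix x y :: "real^'n" and s t :: real
  assume x: "x \<in> {u. infnorm (u - c) \<le> r}" and y: "y \<in> {u. infnorm (u - c) \<le> r}"
    and st: "0 \<le> s" "0 \<le> t" "s + t = 1"
  have "s *\<^sub>R x + t *\<^sub>R y - c = s *\<^sub>R (x - c) + t *\<^sub>R (y - c)"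
    using st by (simp add: algebra_simps flip: scaleR_add_left)
  then have "infnorm (s *\<^sub>R x + t *\<^sub>R y - c) \<le> s * infnorm (x - c) + t * infnorm (y - c)"
    using infnorm_triangle[of "s *\<^sub>R (x - c)" "t *\<^sub>R (y - c)"] st by (simp add: infnorm_mul)
  also have "\<dots> \<le> s * r + t * r"
    using x y st by (intro add_mono mult_left_mono) auto
  also have "\<dots> = r" using st by (simp flip: distrib_right)
  finally show "s *\<^sub>R x + t *\<^sub>R y \<in> {u. infnorm (u - c) \<le> r}" by simp
qed

lemma convex_infnorm_less: "convex {u::real^'n. infnorm (u - c) < r}"
proof (rule convexI)
  fix x y :: "real^'n" and s t :: real
  assume x: "x \<in> {u. infnorm (u - c) < r}" and y: "y \<in> {u. infnorm (u - c) < r}"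
    and st: "0 \<le> s" "0 \<le> t" "s + t = 1"
  have "s *\<^sub>R x + t *\<^sub>R y - c = s *\<^sub>R (x - c) + t *\<^sub>R (y - c)"
    using st by (simp add: algebra_simps flip: scaleR_add_left)
  then have "infnorm (s *\<^sub>R x + t *\<^sub>R y - c) \<le> s * infnorm (x - c) + t * infnorm (y - c)"
    using infnorm_triangle[of "s *\<^sub>R (x - c)" "t *\<^sub>R (y - c)"] st by (simp add: infnorm_mul)
  also have "\<dots> < r"
  proof (cases "s = 0")
    case True
    then show ?thesis using st y by simp
  next
    case False
    then have "s * infnorm (x - c) + t * infnorm (y - c) < s * r + t * r"
      using x y st by (intro add_less_le_mono mult_strict_left_mono mult_left_mono) auto
    then show ?thesis using st by (simp flip: distrib_right)
  qed
  finally show "s *\<^sub>R x + t *\<^sub>R y \<in> {u. infnorm (u - c) < r}" by simp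
qed

lemma card_firstp_le: "card (firstp p :: 'n::{finite,linorder} set) \<le> p"
proof -
  let ?rank = "\<lambda>i::'n. card {j. j < i}"
  have "strict_mono ?rank"
    by (rule strict_monoI) (auto intro!: psubset_card_mono)
  then have "card (firstp p :: 'n set) = card (?rank ` firstp p)"
    by (simp add: card_image strict_mono_imp_inj_on)
  also have "\<dots> \<le> card {..<p}"
    by (rule card_mono) (auto simp: firstp_def)
  finally show ?thesis by simp
qed

lemma projp_nth [simp]: "projp p x $ i = (if i \<in> firstp p then x$i else 0)"
  by (simp add: projp_def)

lemma bounded_linear_projp: "bounded_linear (projp p :: real^'n::{finite,linorder} \<Rightarrow> _)"
  by (rule bounded_linearI') (auto simp: vec_eq_iff)

lemma projp_add: "projp p (x + y) = projp p x + projp p y"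
  and projp_diff: "projp p (x - y) = projp p x - projp p y"
  and projp_scaleR: "projp p (c *\<^sub>R x) = c *\<^sub>R projp p x"
  and projp_zero [simp]: "projp p 0 = 0"
  and projp_projp [simp]: "projp p (projp p x) = projp p x"
  and projp_fibre [simp]: "projp p (x - projp p x) = 0"
  by (auto simp: vec_eq_iff)

lemma projp_eq_0_nth: "projp p w = 0 \<Longrightarrow> i \<in> firstp p \<Longrightarrow> w $ i = 0"
  by (metis projp_nth zero_index)

lemma infnorm_projp_le: "infnorm (projp p x) \<le> infnorm x"
  and infnorm_fibre_le: "infnorm (x - projp p x) \<le> infnorm x"
  by (auto simp: infnorm_le_iff_cart component_le_infnorm_cart infnorm_pos_le)

lemma infnorm_le_max_projp:
  "infnorm (x::real^'n::{finite,linorder}) \<le> max (infnorm (projp p x)) (infnorm (x - projp p x))"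
  unfolding infnorm_le_iff_cart
  by (metis (no_types, lifting) component_le_infnorm_cart diff_zero max.coboundedI1
      max.coboundedI2 projp_nth vector_minus_component)

lemma continuous_on_projp [continuous_intros]:
  "continuous_on S f \<Longrightarrow> continuous_on S (\<lambda>x. projp p (f x))"
  by (rule bounded_linear.continuous_on[OF bounded_linear_projp])

lemma tangent_space_line:
  fixes f :: "'a::real_normed_vector \<Rightarrow> real^'n"
  assumes S: "open S" "s \<in> S" and f: "(f has_derivative f') (at s)"
    and V: "\<And>t. s + t *\<^sub>R h \<in> S \<Longrightarrow> f (s + t *\<^sub>R h) \<in> V"
  shows "f' h \<in> tangent_space V (f s)"
proof -
  have "open ((\<lambda>t::real. s + t *\<^sub>R h) -` S)"
    by (rule continuous_open_vimage[OF S(1)]) (intro continuous_intros)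
  moreover have "0 \<in> (\<lambda>t::real. s + t *\<^sub>R h) -` S" using S(2) by simp
  ultimately obtain e where e: "e > 0" "ball 0 e \<subseteq> (\<lambda>t::real. s + t *\<^sub>R h) -` S"
    using open_contains_ball by blast
  have line: "((\<lambda>t. s + t *\<^sub>R h) has_vector_derivative h) (at 0)"
    by (auto intro!: derivative_eq_intros)
  have "((\<lambda>t. f (s + t *\<^sub>R h)) has_vector_derivative f' h) (at 0)"
    using vector_derivative_diff_chain_within[OF line, of f f'] f
    by (simp add: o_def has_derivative_at_withinI)
  moreover have "f (s + t *\<^sub>R h) \<in> V" if "t \<in> {-e<..<e}" for t
    using e that V by (auto simp: ball_eq_greaterThanLessThan)
  ultimately show ?thesis unfolding tangent_space_def using e(1) by force
qed

lemma tangent_space_fibre_bound: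
  fixes V :: "(real^'n::{finite,linorder}) set"
  assumes eb: "eta_bounded p \<eta> V" and \<eta>: "\<eta> \<ge> 0"
    and v: "w \<in> V" "v \<in> tangent_space V w" and j: "j \<notin> firstp p"
  shows "\<bar>v $ j\<bar> \<le> real p * \<eta> * infnorm (projp p v)"
proof -
  obtain L where L: "\<forall>j i. j \<notin> firstp p \<longrightarrow> i \<in> firstp p \<longrightarrow> \<bar>L j i\<bar> \<le> \<eta>"
    and T: "tangent_space V w = {v. \<forall>j. j \<notin> firstp p \<longrightarrow> v$j = (\<Sum>i\<in>firstp p. L j i * v$i)}"
    using eb v(1) unfolding eta_bounded_def by blast
  have "v $ j = (\<Sum>i\<in>firstp p. L j i * projp p v $ i)"
    using v(2) T j by simp
  then have "\<bar>v $ j\<bar> \<le> (\<Sum>i\<in>firstp p. \<bar>L j i\<bar> * \<bar>projp p v $ i\<bar>)"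
    by (simp add: sum_abs abs_mult flip: abs_mult)
  also have "\<dots> \<le> (\<Sum>i\<in>(firstp p :: 'n set). \<eta> * infnorm (projp p v))"
  proof (rule sum_mono)
    fix i :: 'n assume "i \<in> firstp p"
    then show "\<bar>L j i\<bar> * \<bar>projp p v $ i\<bar> \<le> \<eta> * infnorm (projp p v)"
      using L j \<eta> by (intro mult_mono component_le_infnorm_cart) auto
  qed
  also have "\<dots> \<le> real p * (\<eta> * infnorm (projp p v))"
    using card_firstp_le[of p] \<eta> infnorm_pos_le by (auto intro!: mult_right_mono mult_nonneg_nonneg)
  finally show ?thesis by (simp add: mult.assoc)
qed

lemma tangent_space_projp_eq_0:
  assumes "eta_bounded p \<eta> V" "\<eta> \<ge> 0" "w \<in> V" "v \<in> tangent_space V w" "projp p v = 0"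
  shows "v = 0"
  unfolding vec_eq_iff
proof
  fix j
  show "v $ j = 0 $ j"
    using tangent_space_fibre_bound[OF assms(1-4), of j] projp_eq_0_nth[OF assms(5), of j]
    by (cases "j \<in> firstp p") (auto simp: assms(5) infnorm_0)
qed

text \<open>The curve \<open>t \<mapsto> \<phi> (u + t h)\<close> runs in V with velocity \<open>\<phi>' h\<close>, whose first p
  coordinates are those of h; eta-boundedness then controls the others.\<close>

lemma lift_derivative_fibre_bound:
  assumes eb: "eta_bounded p \<eta> V" and \<eta>: "\<eta> \<ge> 0"
    and B: "open B" "u \<in> B" "projp p u = u" and \<phi>: "(\<phi> has_derivative \<phi>') (at u)"
    and lift: "\<And>z. z \<in> B \<Longrightarrow> projp p z = z \<Longrightarrow> \<phi> z \<in> V \<and> projp p (\<phi> z) = z"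
    and h: "projp p h = h" and j: "j \<notin> firstp p"
  shows "\<bar>\<phi>' h $ j\<bar> \<le> real p * \<eta> * infnorm h"
proof -
  have flat: "projp p (u + t *\<^sub>R h) = u + t *\<^sub>R h" for t
    using B(3) h by (simp add: projp_add projp_scaleR)
  have T: "\<phi>' h \<in> tangent_space V (\<phi> u)"
    by (rule tangent_space_line[OF B(1,2) \<phi>]) (use lift flat in blast)
  have line: "((\<lambda>t. u + t *\<^sub>R h) has_vector_derivative h) (at 0)"
    by (auto intro!: derivative_eq_intros)
  have "((\<lambda>t. \<phi> (u + t *\<^sub>R h)) has_vector_derivative \<phi>' h) (at 0)"
    using vector_derivative_diff_chain_within[OF line, of \<phi> \<phi>'] \<phi>
    by (simp add: o_def has_derivative_at_withinI)
  then have "((\<lambda>t. projp p (\<phi> (u + t *\<^sub>R h))) has_vector_derivative projp p (\<phi>' h)) (at 0)"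
    using bounded_linear.has_vector_derivative[OF bounded_linear_projp] by blast
  moreover have "open ((\<lambda>t::real. u + t *\<^sub>R h) -` B)"
    by (rule continuous_open_vimage[OF B(1)]) (intro continuous_intros)
  moreover have "projp p (\<phi> (u + t *\<^sub>R h)) = u + t *\<^sub>R h" if "u + t *\<^sub>R h \<in> B" for t
    using lift[OF that flat] by simp
  ultimately have "((\<lambda>t. u + t *\<^sub>R h) has_vector_derivative projp p (\<phi>' h)) (at 0)"
    using has_vector_derivative_transform_within_open[of _ "projp p (\<phi>' h)" 0
        "(\<lambda>t::real. u + t *\<^sub>R h) -` B"] B(2) by simp
  then have "projp p (\<phi>' h) = h" using line vector_derivative_unique_at by blast
  then show ?thesis using tangent_space_fibre_bound[OF eb \<eta> _ T j] lift B by simp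
qed

lemma C1_submanifold_chart:
  fixes V :: "(real,'n::{finite,linorder}) vec set"
  assumes man: "C1_submanifold p V" and y: "y \<in> V"
  obtains W and \<Phi> \<Psi> :: "(real,'n) vec \<Rightarrow> (real,'n) vec" and \<Psi>'
  where "open W" "y \<in> W" "continuous_on W \<Phi>" "open (\<Phi> ` W)"
    "\<And>s. s \<in> \<Phi> ` W \<Longrightarrow> (\<Psi> has_derivative \<Psi>' s) (at s)"
    "continuous_on (\<Phi> ` W) (\<lambda>s. matrix (\<Psi>' s))" "inj (\<Psi>' (\<Phi> y))"
    "\<And>v. v \<in> V \<inter> W \<Longrightarrow> projp p (\<Phi> v) = \<Phi> v \<and> \<Psi> (\<Phi> v) = v"
    "\<And>s. s \<in> \<Phi> ` W \<Longrightarrow> projp p s = s \<Longrightarrow> \<Psi> s \<in> V"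
proof -
  let ?E = "{z. \<forall>j. j \<notin> firstp p \<longrightarrow> z$j = 0}"
  have E: "z \<in> ?E \<longleftrightarrow> projp p z = z" for z by (auto simp: vec_eq_iff)
  have "\<exists>W \<Phi> \<Psi>. open W \<and> y \<in> W \<and> inj_on \<Phi> W \<and> open (\<Phi> ` W) \<and> C1_on W \<Phi> \<and> C1_on (\<Phi> ` W) \<Psi>
      \<and> (\<forall>z\<in>W. \<Psi> (\<Phi> z) = z) \<and> \<Phi> ` (V \<inter> W) = \<Phi> ` W \<inter> ?E"
    using man y unfolding C1_submanifold_def by blast
  then obtain W \<Phi> \<Psi> where W: "open W" "y \<in> W" "open (\<Phi> ` W)"
    and C1: "C1_on W \<Phi>" "C1_on (\<Phi> ` W) \<Psi>" and inv: "\<forall>z\<in>W. \<Psi> (\<Phi> z) = z"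
    and img: "\<Phi> ` (V \<inter> W) = \<Phi> ` W \<inter> ?E"
    by blast
  obtain \<Phi>' where d\<Phi>: "\<And>z. z \<in> W \<Longrightarrow> (\<Phi> has_derivative \<Phi>' z) (at z)"
    using C1(1) unfolding C1_on_def by blast
  obtain \<Psi>' where d\<Psi>: "\<And>s. s \<in> \<Phi> ` W \<Longrightarrow> (\<Psi> has_derivative \<Psi>' s) (at s)"
    and c\<Psi>: "continuous_on (\<Phi> ` W) (\<lambda>s. matrix (\<Psi>' s))"
    using C1(2) unfolding C1_on_def by blast
  have yW: "\<Phi> y \<in> \<Phi> ` W" using W(2) by simp
  have "(\<Psi> \<circ> \<Phi> has_derivative \<Psi>' (\<Phi> y) \<circ> \<Phi>' y) (at y)"
    by (rule diff_chain_at[OF d\<Phi>[OF W(2)] d\<Psi>[OF yW]])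
  moreover have "(\<Psi> \<circ> \<Phi> has_derivative id) (at y)"
    by (rule has_derivative_transform_within_open[OF has_derivative_id W(1,2)]) (simp add: inv)
  ultimately have "\<Psi>' (\<Phi> y) \<circ> \<Phi>' y = id"
    using has_derivative_unique by blast
  then have "surj (\<Psi>' (\<Phi> y))" by (metis comp_apply id_apply surjI)
  then have inj: "inj (\<Psi>' (\<Phi> y))"
    by (rule linear_surjective_imp_injective[OF has_derivative_linear[OF d\<Psi>[OF yW]]]) simp
  have cont: "continuous_on W \<Phi>"
    by (intro continuous_at_imp_continuous_on ballI has_derivative_continuous[OF d\<Phi>])
  have chart: "projp p (\<Phi> v) = \<Phi> v \<and> \<Psi> (\<Phi> v) = v" if "v \<in> V \<inter> W" for v
  proof -
    have "\<Phi> v \<in> \<Phi> ` (V \<inter> W)" using that by (rule imageI)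
    then have "\<Phi> v \<in> ?E" unfolding img by (rule IntD2)
    then show ?thesis using E inv that by blast
  qed
  have flat: "\<Psi> s \<in> V" if "s \<in> \<Phi> ` W" "projp p s = s" for s
  proof -
    have "s \<in> \<Phi> ` (V \<inter> W)" using that img E by blast
    then obtain v where "v \<in> V \<inter> W" "s = \<Phi> v" by blast
    then show ?thesis using inv by simp
  qed
  show thesis
    by (rule that[of W \<Phi> \<Psi> \<Psi>']) (use W cont d\<Psi> c\<Psi> inj chart flat in auto)
qed

lemma continuous_on_Blinfun_componentwise:
  fixes f :: "'a::t2_space \<Rightarrow> 'b::euclidean_space \<Rightarrow> 'c::real_normed_vector"
  assumes "\<And>s. s \<in> S \<Longrightarrow> bounded_linear (f s)" "\<And>i. continuous_on S (\<lambda>s. f s i)"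
  shows "continuous_on S (\<lambda>s. Blinfun (f s))"
  by (rule continuous_on_blinfun_componentwise)
     (use assms in \<open>auto simp: bounded_linear_Blinfun_apply cong: continuous_on_cong\<close>)

text \<open>The first p coordinates of a chart inverse, extended by the identity on the last
  n - p coordinates so that the inverse function theorem applies to it.\<close>

definition flat_extension ::
    "nat \<Rightarrow> ((real,'n) vec \<Rightarrow> (real,'n) vec) \<Rightarrow> (real,'n) vec \<Rightarrow> (real,'n::{finite,linorder}) vec" where
  "flat_extension p \<Psi> z = projp p (\<Psi> (projp p z)) + (z - projp p z)"

lemma flattened_local_inverse:
  fixes \<Psi> :: "(real,'n::{finite,linorder}) vec \<Rightarrow> (real,'n) vec"
  assumes S: "open S" and d\<Psi>: "\<And>s. s \<in> S \<Longrightarrow> (\<Psi> has_derivative \<Psi>' s) (at s)"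
    and c\<Psi>: "continuous_on S (\<lambda>s. matrix (\<Psi>' s))"
    and s0: "s0 \<in> S" "projp p s0 = s0"
    and inj0: "\<And>h. projp p h = h \<Longrightarrow> projp p (\<Psi>' s0 h) = 0 \<Longrightarrow> h = 0"
  obtains U G G' where "open U" "U \<subseteq> projp p -` S" "s0 \<in> U" "open (flat_extension p \<Psi> ` U)"
    "homeomorphism U (flat_extension p \<Psi> ` U) (flat_extension p \<Psi>) G"
    "\<And>u. u \<in> flat_extension p \<Psi> ` U \<Longrightarrow> (G has_derivative G' u) (at u)"
proof -
  define F where "F = flat_extension p \<Psi>"
  define U1 where "U1 = projp p -` S"
  have U1: "open U1" unfolding U1_def
    by (rule continuous_open_vimage[OF S]) (simp add: bounded_linear_projp linear_continuous_at)
  define F' where "F' z h = projp p (\<Psi>' (projp p z) (projp p h)) + (h - projp p h)" for z h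
  have dF: "(F has_derivative F' z) (at z)" if "z \<in> U1" for z
  proof -
    have P: "(projp p has_derivative projp p) (at z)"
      by (rule bounded_linear_imp_has_derivative[OF bounded_linear_projp])
    have "((\<lambda>z. \<Psi> (projp p z)) has_derivative (\<lambda>h. \<Psi>' (projp p z) (projp p h))) (at z)"
      using has_derivative_compose[OF P d\<Psi>] that by (simp add: U1_def)
    then show ?thesis unfolding F_def F'_def flat_extension_def[abs_def]
      by (intro has_derivative_add has_derivative_diff has_derivative_ident P
          bounded_linear.has_derivative[OF bounded_linear_projp])
  qed
  have bl: "bounded_linear (F' z)" if "z \<in> U1" for z
    using dF[OF that] has_derivative_bounded_linear by blast
  have cF: "continuous_on U1 (\<lambda>z. Blinfun (F' z))"
  proof (rule continuous_on_Blinfun_componentwise[OF bl])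
    fix i
    have "continuous_on U1 (\<lambda>z. matrix (\<Psi>' (projp p z)))"
      by (rule continuous_on_compose2[OF c\<Psi>]) (auto simp: U1_def intro!: continuous_intros)
    then have "continuous_on U1 (\<lambda>z. projp p (matrix (\<Psi>' (projp p z)) *v projp p i) + (i - projp p i))"
      unfolding matrix_vector_mult_def by (intro continuous_intros continuous_on_component) auto
    moreover have "matrix (\<Psi>' (projp p z)) *v projp p i = \<Psi>' (projp p z) (projp p i)" if "z \<in> U1" for z
      using has_derivative_linear[OF d\<Psi>] that by (simp add: U1_def matrix_works)
    ultimately show "continuous_on U1 (\<lambda>z. F' z i)"
      by (simp add: F'_def cong: continuous_on_cong)
  qed
  have "inj (F' s0)"
  proof -
    have "h = 0" if "F' s0 h = 0" for h
    proof -
      have "projp p (\<Psi>' s0 (projp p h)) = 0" "h - projp p h = 0"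
        using arg_cong[OF that, of "projp p"] that s0(2) by (simp_all add: F'_def projp_add)
      then show ?thesis using inj0[of h] by simp
    qed
    then show ?thesis using bl[of s0] s0 U1_def linear_injective_0 bounded_linear.linear by blast
  qed
  then obtain L where L: "linear L" "L \<circ> F' s0 = id"
    using linear_injective_left_inverse bl[of s0] s0 bounded_linear.linear U1_def by blast
  have inv: "Blinfun L o\<^sub>L Blinfun (F' s0) = id_blinfun"
    using L bl[of s0] s0 U1_def
    by (intro blinfun_eqI) (simp add: bounded_linear_Blinfun_apply linear_conv_bounded_linear pointfree_idE)
  have dF': "(F has_derivative blinfun_apply (Blinfun (F' z))) (at z)" if "z \<in> U1" for z
    using dF[OF that] bl[OF that] by (simp add: bounded_linear_Blinfun_apply)
  have "s0 \<in> U1" using s0 by (simp add: U1_def)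
  obtain U V G G' where "open U" "U \<subseteq> U1" "s0 \<in> U" "open V" "homeomorphism U V F G"
    "\<And>u. u \<in> V \<Longrightarrow> (G has_derivative G' u) (at u)"
    using inverse_function_theorem[OF U1 dF' cF \<open>s0 \<in> U1\<close> inv] by metis
  moreover have "V = F ` U" using \<open>homeomorphism U V F G\<close> by (simp add: homeomorphism_def)
  ultimately show thesis using that U1_def F_def by blast
qed

lemma projp_flat_extension: "projp p (flat_extension p \<Psi> z) = projp p (\<Psi> (projp p z))"
  and flat_extension_fibre: "flat_extension p \<Psi> z - projp p (flat_extension p \<Psi> z) = z - projp p z"
  by (simp_all add: flat_extension_def projp_add projp_diff)

lemma flat_extension_inverse:
  assumes hom: "homeomorphism U (flat_extension p \<Psi> ` U) (flat_extension p \<Psi>) G"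
    and u: "u \<in> flat_extension p \<Psi> ` U" "projp p u = u"
  shows "G u \<in> U" "projp p (G u) = G u" "projp p (\<Psi> (G u)) = u"
proof -
  show GU: "G u \<in> U" using hom u(1) by (auto simp: homeomorphism_def)
  have F: "flat_extension p \<Psi> (G u) = u" using hom u(1) by (auto simp: homeomorphism_def)
  then show flat: "projp p (G u) = G u"
    using flat_extension_fibre[of p \<Psi> "G u"] u(2) by simp
  show "projp p (\<Psi> (G u)) = u"
    using F projp_flat_extension[of p \<Psi> "G u"] flat u(2) by simp
qed

lemma C1_submanifold_local_graph:
  fixes V :: "(real,'n::{finite,linorder}) vec set"
  assumes man: "C1_submanifold p V" and eb: "eta_bounded p \<eta> V" and \<eta>: "\<eta> \<ge> 0" and y: "y \<in> V"
  obtains N B and g :: "(real,'n) vec \<Rightarrow> (real,'n) vec"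
  where "open N" "y \<in> N" "open B" "projp p y \<in> B"
    "\<And>u. u \<in> B \<Longrightarrow> projp p u = u \<Longrightarrow> u + g u \<in> V"
    "\<And>u. projp p (g u) = 0"
    "\<And>v. v \<in> V \<inter> N \<Longrightarrow> projp p v \<in> B \<and> g (projp p v) = v - projp p v"
    "\<And>u. u \<in> B \<Longrightarrow> projp p u = u \<Longrightarrow> \<exists>D. (g has_derivative D) (at u) \<and>
        (\<forall>h j. projp p h = h \<longrightarrow> j \<notin> firstp p \<longrightarrow> \<bar>D h $ j\<bar> \<le> real p * \<eta> * infnorm h)"
proof -
  obtain W and \<Phi> \<Psi> :: "(real,'n) vec \<Rightarrow> (real,'n) vec" and \<Psi>'
    where W: "open W" "y \<in> W" and c\<Phi>: "continuous_on W \<Phi>" and S: "open (\<Phi> ` W)"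
    and d\<Psi>: "\<And>s. s \<in> \<Phi> ` W \<Longrightarrow> (\<Psi> has_derivative \<Psi>' s) (at s)"
    and c\<Psi>: "continuous_on (\<Phi> ` W) (\<lambda>s. matrix (\<Psi>' s))" and inj: "inj (\<Psi>' (\<Phi> y))"
    and chart: "\<And>v. v \<in> V \<inter> W \<Longrightarrow> projp p (\<Phi> v) = \<Phi> v \<and> \<Psi> (\<Phi> v) = v"
    and flat: "\<And>s. s \<in> \<Phi> ` W \<Longrightarrow> projp p s = s \<Longrightarrow> \<Psi> s \<in> V"
    using C1_submanifold_chart[OF man y] by blast
  define s0 where "s0 = \<Phi> y"
  have s0: "s0 \<in> \<Phi> ` W" "projp p s0 = s0" "\<Psi> s0 = y" using chart[of y] W y by (auto simp: s0_def)
  have inj0: "h = 0" if h: "projp p h = h" "projp p (\<Psi>' s0 h) = 0" for h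
  proof -
    have "\<Psi>' s0 h \<in> tangent_space V (\<Psi> s0)"
      by (rule tangent_space_line[OF S s0(1) d\<Psi>[OF s0(1)]])
         (use flat s0(2) h(1) in \<open>simp add: projp_add projp_scaleR\<close>)
    then have "\<Psi>' s0 h = 0" using tangent_space_projp_eq_0[OF eb \<eta>] h(2) s0(3) y by simp
    then show "h = 0"
      using inj linear_injective_0[OF has_derivative_linear[OF d\<Psi>[OF s0(1)]]] by (simp add: s0_def)
  qed
  let ?F = "flat_extension p \<Psi>"
  obtain U G G' where U: "open U" "U \<subseteq> projp p -` \<Phi> ` W" "s0 \<in> U" and B: "open (?F ` U)"
    and hom: "homeomorphism U (?F ` U) ?F G"
    and dG: "\<And>u. u \<in> ?F ` U \<Longrightarrow> (G has_derivative G' u) (at u)"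
    using flattened_local_inverse[OF S d\<Psi> c\<Psi> s0(1,2) inj0] by blast
  have lift: "G u \<in> \<Phi> ` W \<and> \<Psi> (G u) \<in> V \<and> projp p (\<Psi> (G u)) = u"
    if "u \<in> ?F ` U" "projp p u = u" for u
    using flat_extension_inverse[OF hom that] U(2) flat by force
  define g where "g u = \<Psi> (G u) - projp p (\<Psi> (G u))" for u
  show thesis
  proof
    show "open (W \<inter> \<Phi> -` U)" by (rule continuous_open_preimage[OF c\<Phi> W(1) U(1)])
    show "y \<in> W \<inter> \<Phi> -` U" using W(2) U(3) by (simp add: s0_def)
    show "open (?F ` U)" by (fact B)
    have "?F s0 = projp p y" using s0 by (simp add: flat_extension_def)
    then show "projp p y \<in> ?F ` U" using U(3) by (metis imageI)
    show "u + g u \<in> V" if "u \<in> ?F ` U" "projp p u = u" for u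
      using lift[OF that] by (simp add: g_def)
    show "projp p (g u) = 0" for u by (simp add: g_def projp_diff)
    show "projp p v \<in> ?F ` U \<and> g (projp p v) = v - projp p v" if v: "v \<in> V \<inter> (W \<inter> \<Phi> -` U)" for v
    proof -
      have \<Phi>v: "projp p (\<Phi> v) = \<Phi> v" "\<Psi> (\<Phi> v) = v" "\<Phi> v \<in> U" using chart v by auto
      then have "?F (\<Phi> v) = projp p v" by (simp add: flat_extension_def)
      then show ?thesis using hom \<Phi>v by (metis g_def homeomorphism_apply1 imageI)
    qed
    show "\<exists>D. (g has_derivative D) (at u) \<and>
        (\<forall>h j. projp p h = h \<longrightarrow> j \<notin> firstp p \<longrightarrow> \<bar>D h $ j\<bar> \<le> real p * \<eta> * infnorm h)"
      if u: "u \<in> ?F ` U" "projp p u = u" for u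
    proof (intro exI conjI allI impI)
      have d\<phi>: "((\<lambda>z. \<Psi> (G z)) has_derivative (\<lambda>h. \<Psi>' (G u) (G' u h))) (at u)"
        using has_derivative_compose[OF dG[OF u(1)] d\<Psi>] lift[OF u] by simp
      then show "(g has_derivative (\<lambda>h. \<Psi>' (G u) (G' u h) - projp p (\<Psi>' (G u) (G' u h)))) (at u)"
        unfolding g_def[abs_def]
        by (intro has_derivative_diff bounded_linear.has_derivative[OF bounded_linear_projp])
      fix h :: "(real,'n) vec" and j :: 'n
      assume "projp p h = h" "j \<notin> firstp p"
      with lift_derivative_fibre_bound[OF eb \<eta> B u(1,2) d\<phi>, of h j] lift
      show "\<bar>(\<Psi>' (G u) (G' u h) - projp p (\<Psi>' (G u) (G' u h))) $ j\<bar> \<le> real p * \<eta> * infnorm h"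
        by simp
    qed
  qed
qed

definition flat_ball :: "nat \<Rightarrow> (real,'n) vec \<Rightarrow> real \<Rightarrow> (real,'n::{finite,linorder}) vec set" where
  "flat_ball p c d = {u. projp p u = u \<and> infnorm (u - c) < d}"

definition cylinder :: "nat \<Rightarrow> real \<Rightarrow> (real,'n) vec \<Rightarrow> real \<Rightarrow> (real,'n::{finite,linorder}) vec set" where
  "cylinder p M y d = {z. infnorm (projp p z - projp p y) < d \<and>
      infnorm ((z - projp p z) - (y - projp p y)) < M * d}"

lemma convex_flat_ball: "convex (flat_ball p c d)"
proof -
  have "convex {u. projp p u = u}"
    by (rule subspace_imp_convex) (auto simp: subspace_def projp_add projp_scaleR)
  then show ?thesis
    unfolding flat_ball_def Collect_conj_eq by (intro convex_Int convex_infnorm_less)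
qed

lemma centre_in_flat_ball: "projp p c = c \<Longrightarrow> d > 0 \<Longrightarrow> c \<in> flat_ball p c d"
  by (simp add: flat_ball_def infnorm_0)

lemma open_cylinder: "open (cylinder p M y d)"
  unfolding cylinder_def
  by (intro open_Collect_conj open_Collect_less continuous_intros continuous_on_infnorm)

lemma centre_in_cylinder: "d > 0 \<Longrightarrow> M > 0 \<Longrightarrow> y \<in> cylinder p M y d"
  by (simp add: cylinder_def infnorm_0)

lemma cylinder_infnorm_less:
  assumes "z \<in> cylinder p M y d" "M \<ge> 0"
  shows "infnorm (z - y) < (M + 1) * d"
proof -
  have z: "infnorm (projp p (z - y)) < d" "infnorm ((z - y) - projp p (z - y)) < M * d"
    using assms(1) by (simp_all add: cylinder_def projp_diff algebra_simps)
  then have "d > 0" using infnorm_pos_le le_less_trans by blast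
  then have "d \<le> (M + 1) * d" "M * d \<le> (M + 1) * d"
    using assms(2) by (simp_all add: algebra_simps)
  with z show ?thesis using infnorm_le_max_projp[of "z - y" p] by linarith
qed

lemma lip_map_iff:
  "lip_map p K D f \<longleftrightarrow> (\<forall>u\<in>D. projp p (f u) = 0) \<and>
     (\<forall>u\<in>D. \<forall>v\<in>D. infnorm (f u - f v) \<le> K * infnorm (u - v))"
  by (auto simp: lip_map_def maxnorm_eq_infnorm vec_eq_iff)

lemma lip_map_projp: "lip_map p K D f \<Longrightarrow> u \<in> D \<Longrightarrow> projp p (f u) = 0"
  and lip_map_le: "lip_map p K D f \<Longrightarrow> u \<in> D \<Longrightarrow> v \<in> D \<Longrightarrow> infnorm (f u - f v) \<le> K * infnorm (u - v)"
  by (simp_all add: lip_map_iff)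

lemma lip_map_subset: "lip_map p K D f \<Longrightarrow> D' \<subseteq> D \<Longrightarrow> lip_map p K D' f"
  unfolding lip_map_def by blast

lemma projp_graph_point: "lip_map p K D f \<Longrightarrow> u \<in> D \<Longrightarrow> projp p u = u \<Longrightarrow> projp p (u + f u) = u"
  by (simp add: projp_add lip_map_projp)

lemma graph_in_cylinder:
  assumes f: "lip_map p K D f" and y: "projp p y \<in> D" "f (projp p y) = y - projp p y"
    and u: "u \<in> D" "u \<in> flat_ball p (projp p y) d" and K: "0 \<le> K" "K < M"
  shows "u + f u \<in> cylinder p M y d"
proof -
  have d: "infnorm (u - projp p y) < d" using u by (simp add: flat_ball_def)
  then have "d > 0" using infnorm_pos_le[of "u - projp p y"] by linarith
  have "infnorm (f u - f (projp p y)) \<le> K * infnorm (u - projp p y)"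
    using lip_map_le[OF f u(1) y(1)] .
  also have "\<dots> \<le> K * d" using d K by (intro mult_left_mono) auto
  also have "\<dots> < M * d" using K \<open>d > 0\<close> by simp
  finally show ?thesis
    using u d y lip_map_projp[OF f u(1)] by (simp add: cylinder_def flat_ball_def projp_add)
qed

lemma lip_map_of_derivative_bound:
  fixes g :: "(real,'n::{finite,linorder}) vec \<Rightarrow> (real,'n) vec"
  assumes S: "convex S" "\<And>u. u \<in> S \<Longrightarrow> projp p u = u"
    and der: "\<And>u. u \<in> S \<Longrightarrow> \<exists>D. (g has_derivative D) (at u) \<and>
        (\<forall>h j. projp p h = h \<longrightarrow> j \<notin> firstp p \<longrightarrow> \<bar>D h $ j\<bar> \<le> K * infnorm h)"
    and g: "\<And>u. projp p (g u) = 0" and K: "K \<ge> 0"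
  shows "lip_map p K S g"
  unfolding lip_map_iff
proof (intro conjI ballI g)
  fix a b assume a: "a \<in> S" and b: "b \<in> S"
  obtain Dg where Dg: "\<And>u. u \<in> S \<Longrightarrow> (g has_derivative Dg u) (at u)"
    "\<And>u h j. u \<in> S \<Longrightarrow> projp p h = h \<Longrightarrow> j \<notin> firstp p \<Longrightarrow> \<bar>Dg u h $ j\<bar> \<le> K * infnorm h"
    using der by metis
  have ab: "projp p (a - b) = a - b" using S(2)[OF a] S(2)[OF b] by (simp add: projp_diff)
  show "infnorm (g a - g b) \<le> K * infnorm (a - b)"
    unfolding infnorm_le_iff_cart
  proof
    fix j
    show "\<bar>(g a - g b) $ j\<bar> \<le> K * infnorm (a - b)"
    proof (cases "j \<in> firstp p")
      case True
      then have "(g a - g b) $ j = 0" using projp_eq_0_nth[OF g] by simp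
      then show ?thesis using K by (simp add: infnorm_pos_le)
    next
      case False
      define \<gamma> where "\<gamma> t = b + t *\<^sub>R (a - b)" for t
      have \<gamma>S: "\<gamma> t \<in> S" if "0 \<le> t" "t \<le> 1" for t
        using convexD[OF S(1) b a, of "1 - t" t] that by (simp add: \<gamma>_def algebra_simps)
      have "\<exists>t\<in>{0<..<1}. g (\<gamma> 1) $ j - g (\<gamma> 0) $ j = Dg (\<gamma> t) ((1 - 0) *\<^sub>R (a - b)) $ j"
      proof (rule mvt_simple[of 0 1 "\<lambda>t. g (\<gamma> t) $ j" "\<lambda>t s. Dg (\<gamma> t) (s *\<^sub>R (a - b)) $ j"])
        fix t :: real assume "0 \<le> t" "t \<le> 1"
        moreover have "(\<gamma> has_derivative (\<lambda>s. s *\<^sub>R (a - b))) (at t within {0..1})"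
          unfolding \<gamma>_def by (auto intro!: derivative_eq_intros)
        ultimately have "((\<lambda>t. g (\<gamma> t)) has_derivative (\<lambda>s. Dg (\<gamma> t) (s *\<^sub>R (a - b)))) (at t within {0..1})"
          using has_derivative_compose Dg(1)[OF \<gamma>S] by blast
        then show "((\<lambda>t. g (\<gamma> t) $ j) has_derivative (\<lambda>s. Dg (\<gamma> t) (s *\<^sub>R (a - b)) $ j)) (at t within {0..1})"
          by (rule bounded_linear.has_derivative[OF bounded_linear_vec_nth])
      qed simp
      then obtain t where "0 < t" "t < 1" "(g a - g b) $ j = Dg (\<gamma> t) (a - b) $ j"
        by (auto simp: \<gamma>_def)
      then show ?thesis using Dg(2)[OF \<gamma>S ab False] by simp
    qed
  qed
qed

lemma C1_submanifold_lipschitz_graph: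
  fixes V :: "(real,'n::{finite,linorder}) vec set"
  assumes man: "C1_submanifold p V" and eb: "eta_bounded p \<eta> V" and \<eta>: "\<eta> \<ge> 0" and y: "y \<in> V"
    and M: "real p * \<eta> < M"
  obtains \<delta> h where "\<delta> > 0" "lip_map p (real p * \<eta>) (flat_ball p (projp p y) \<delta>) h"
    "V \<inter> cylinder p M y \<delta> = graph (flat_ball p (projp p y) \<delta>) h"
proof -
  let ?K = "real p * \<eta>" and ?D = "\<lambda>\<delta>. flat_ball p (projp p y) \<delta>"
  have K: "?K \<ge> 0" using \<eta> by simp
  obtain N B and g :: "(real,'n) vec \<Rightarrow> (real,'n) vec" where N: "open N" "y \<in> N" and B: "open B" "projp p y \<in> B"
    and gV: "\<And>u. u \<in> B \<Longrightarrow> projp p u = u \<Longrightarrow> u + g u \<in> V"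
    and g0: "\<And>u. projp p (g u) = 0"
    and VN: "\<And>v. v \<in> V \<inter> N \<Longrightarrow> projp p v \<in> B \<and> g (projp p v) = v - projp p v"
    and der: "\<And>u. u \<in> B \<Longrightarrow> projp p u = u \<Longrightarrow> \<exists>D. (g has_derivative D) (at u) \<and>
        (\<forall>h j. projp p h = h \<longrightarrow> j \<notin> firstp p \<longrightarrow> \<bar>D h $ j\<bar> \<le> ?K * infnorm h)"
    using C1_submanifold_local_graph[OF man eb \<eta> y] by blast
  obtain e1 where e1: "e1 > 0" "\<And>z. infnorm (z - y) < e1 \<Longrightarrow> z \<in> N"
    using open_contains_infnorm_ball[OF N] by blast
  obtain e2 where e2: "e2 > 0" "\<And>z. infnorm (z - projp p y) < e2 \<Longrightarrow> z \<in> B"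
    using open_contains_infnorm_ball[OF B] by blast
  define \<delta> where "\<delta> = min e1 e2 / (M + 1)"
  have M0: "M \<ge> 0" using M K by linarith
  have M\<delta>: "(M + 1) * \<delta> = min e1 e2" using M0 by (simp add: \<delta>_def)
  have "\<delta> > 0" using e1 e2 M0 by (simp add: \<delta>_def)
  moreover have "\<delta> \<le> (M + 1) * \<delta>" using M0 \<open>\<delta> > 0\<close> by (simp add: algebra_simps)
  ultimately have \<delta>: "\<delta> > 0" "(M + 1) * \<delta> \<le> e1" "\<delta> \<le> e2" using M\<delta> by auto
  have DB: "?D \<delta> \<subseteq> B" using e2 \<delta>(3) by (auto simp: flat_ball_def)
  have lip: "lip_map p ?K (?D \<delta>) g"
    by (rule lip_map_of_derivative_bound[OF convex_flat_ball _ _ g0 K])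
       (use der DB in \<open>auto simp: flat_ball_def\<close>)
  have "V \<inter> cylinder p M y \<delta> = graph (?D \<delta>) g"
  proof
    show "V \<inter> cylinder p M y \<delta> \<subseteq> graph (?D \<delta>) g"
    proof
      fix z assume z: "z \<in> V \<inter> cylinder p M y \<delta>"
      then have "z \<in> N" using e1 \<delta>(2) cylinder_infnorm_less[OF _ M0] by fastforce
      then have "z = projp p z + g (projp p z)" using VN z by simp
      moreover have "projp p z \<in> ?D \<delta>" using z by (simp add: cylinder_def flat_ball_def)
      ultimately show "z \<in> graph (?D \<delta>) g" unfolding graph_def by blast
    qed
    have gy: "g (projp p y) = y - projp p y" using VN y N(2) by blast
    have yD: "projp p y \<in> ?D \<delta>" using \<delta>(1) by (simp add: centre_in_flat_ball)
    show "graph (?D \<delta>) g \<subseteq> V \<inter> cylinder p M y \<delta>"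
      using gV DB graph_in_cylinder[OF lip yD gy _ _ K M]
      by (auto simp: graph_def flat_ball_def)
  qed
  with \<delta>(1) lip show thesis by (rule that)
qed

lemma lip_map_lipschitz_on:
  fixes f :: "(real,'n::{finite,linorder}) vec \<Rightarrow> (real,'n) vec"
  assumes "lip_map p K D f" "K \<ge> 0"
  shows "(sqrt (real CARD('n)) * K)-lipschitz_on D f"
proof (rule lipschitz_onI)
  fix u v assume "u \<in> D" "v \<in> D"
  have "dist (f u) (f v) \<le> sqrt (real CARD('n)) * infnorm (f u - f v)"
    using norm_le_sqrt_card_infnorm by (simp add: dist_norm)
  also have "\<dots> \<le> sqrt (real CARD('n)) * (K * infnorm (u - v))"
    using lip_map_le[OF assms(1) \<open>u \<in> D\<close> \<open>v \<in> D\<close>] by (simp add: mult_left_mono)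
  also have "\<dots> \<le> sqrt (real CARD('n)) * (K * dist u v)"
    using assms(2) infnorm_le_norm[of "u - v"] by (simp add: dist_norm mult_left_mono)
  finally show "dist (f u) (f v) \<le> sqrt (real CARD('n)) * K * dist u v" by (simp add: mult.assoc)
qed (use assms in simp)

lemma lip_map_continuous_on: "lip_map p K D f \<Longrightarrow> K \<ge> 0 \<Longrightarrow> continuous_on D f"
  using lip_map_lipschitz_on lipschitz_on_continuous_on by blast

lemma infnorm_lipschitz_of_local:
  fixes f :: "(real,'m::finite) vec \<Rightarrow> (real,'n::finite) vec"
  assumes S: "convex S" and \<epsilon>: "\<epsilon> > 0" and K: "K \<ge> 0"
    and loc: "\<And>u v. u \<in> S \<Longrightarrow> v \<in> S \<Longrightarrow> infnorm (u - v) < \<epsilon> \<Longrightarrow>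
        infnorm (f u - f v) \<le> K * infnorm (u - v)"
    and ab: "a \<in> S" "b \<in> S"
  shows "infnorm (f a - f b) \<le> K * infnorm (a - b)"
proof -
  define t where "t = infnorm (a - b)"
  define N :: nat where "N = nat \<lceil>t / \<epsilon>\<rceil> + 1"
  have "real N > 0" "t / \<epsilon> < real N" unfolding N_def by linarith+
  then have N: "real N > 0" "t / real N < \<epsilon>" using \<epsilon> by (simp_all add: field_simps)
  define q where "q i = b + (real i / real N) *\<^sub>R (a - b)" for i
  have qS: "q i \<in> S" if "i \<le> N" for i
    using convexD[OF S ab(2,1), of "1 - real i / real N" "real i / real N"] that N(1)
    by (simp add: q_def algebra_simps)
  have step: "infnorm (q (Suc i) - q i) = t / real N" for i
  proof -
    have "q (Suc i) - q i = (1 / real N) *\<^sub>R (a - b)"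
      by (simp add: q_def add_divide_distrib algebra_simps flip: scaleR_diff_left)
    then show ?thesis by (simp add: infnorm_mul t_def)
  qed
  have "infnorm (f (q i) - f b) \<le> K * (real i * (t / real N))" if "i \<le> N" for i
    using that
  proof (induction i)
    case 0
    then show ?case by (simp add: q_def infnorm_0)
  next
    case (Suc i)
    have "infnorm (f (q (Suc i)) - f b) \<le> infnorm (f (q (Suc i)) - f (q i)) + infnorm (f (q i) - f b)"
      using infnorm_triangle[of "f (q (Suc i)) - f (q i)" "f (q i) - f b"] by simp
    also have "\<dots> \<le> K * (t / real N) + K * (real i * (t / real N))"
      using loc[OF qS qS, of "Suc i" i] Suc step N(2) by (intro add_mono) auto
    finally show ?case by (simp add: algebra_simps add_divide_distrib)
  qed
  from this[of N] show ?thesis using N(1) by (simp add: q_def t_def)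
qed

lemma radial_retraction:
  fixes B :: "(real,'n::finite) vec set"
  assumes B: "convex B" "u0 \<in> B" and rs: "r \<ge> 0" "s \<ge> 0"
  obtains \<rho> where "\<And>u. u \<in> B \<Longrightarrow> infnorm (u - u0) \<le> r + s \<Longrightarrow>
      \<rho> u \<in> B \<and> infnorm (\<rho> u - u0) \<le> r \<and> infnorm (u - \<rho> u) \<le> s"
    "\<And>u. infnorm (u - u0) \<le> r \<Longrightarrow> \<rho> u = u"
proof
  define \<rho> where "\<rho> u = (if infnorm (u - u0) \<le> r then u else u0 + (r / infnorm (u - u0)) *\<^sub>R (u - u0))" for u
  show "\<rho> u = u" if "infnorm (u - u0) \<le> r" for u using that by (simp add: \<rho>_def)
  fix u assume u: "u \<in> B" "infnorm (u - u0) \<le> r + s"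
  show "\<rho> u \<in> B \<and> infnorm (\<rho> u - u0) \<le> r \<and> infnorm (u - \<rho> u) \<le> s"
  proof (cases "infnorm (u - u0) \<le> r")
    case True
    then show ?thesis using u rs by (simp add: \<rho>_def infnorm_0)
  next
    case False
    define l where "l = r / infnorm (u - u0)"
    have l: "0 \<le> l" "l < 1" using False rs by (auto simp: l_def)
    have \<rho>u: "\<rho> u = (1 - l) *\<^sub>R u0 + l *\<^sub>R u"
      using False by (simp add: \<rho>_def l_def algebra_simps)
    have d: "\<rho> u - u0 = l *\<^sub>R (u - u0)" "u - \<rho> u = (1 - l) *\<^sub>R (u - u0)"
      using \<rho>u by (simp_all add: algebra_simps)
    have "infnorm (u - u0) > 0" using False rs by linarith
    then have "infnorm (\<rho> u - u0) = r" "infnorm (u - \<rho> u) = infnorm (u - u0) - r"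
      unfolding d infnorm_mul using l rs by (simp_all add: l_def algebra_simps)
    then show ?thesis
      using convexD[OF B(1,2) u(1), of "1 - l" l] l \<rho>u u(2) by simp
  qed
qed

lemma connected_component_subset_clopenin:
  assumes "openin (top_of_set S) T" "closedin (top_of_set S) T" "x \<in> T"
  shows "connected_component_set S x \<subseteq> T"
proof -
  let ?C = "connected_component_set S x"
  have CS: "?C \<subseteq> S" by (rule connected_component_subset)
  obtain U F where "open U" "closed F" "T = S \<inter> U" "T = S \<inter> F"
    using assms(1,2) by (auto simp: openin_open closedin_closed)
  then have "openin (top_of_set ?C) (?C \<inter> T)" "closedin (top_of_set ?C) (?C \<inter> T)"
    using CS by (metis inf.absorb_iff1 inf_assoc openin_open_Int closedin_closed_Int)+
  moreover have "x \<in> ?C \<inter> T" using assms(3) \<open>T = S \<inter> U\<close> by simp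
  ultimately have "?C \<inter> T = ?C" using connected_clopen connected_connected_component by blast
  then show ?thesis by blast
qed

locale lipschitz_atlas =
  fixes p :: nat and K M \<delta> :: real and V Q :: "(real,'n::{finite,linorder}) vec set"
    and H :: "(real,'n) vec \<Rightarrow> (real,'n) vec \<Rightarrow> (real,'n) vec"
  assumes K: "0 \<le> K" "2 * K < M" and \<delta>: "0 < \<delta>"
    and chart_lip: "\<And>y. y \<in> V \<inter> Q \<Longrightarrow> lip_map p K (flat_ball p (projp p y) \<delta>) (H y)"
    and chart_graph: "\<And>y. y \<in> V \<inter> Q \<Longrightarrow> V \<inter> cylinder p M y \<delta> = graph (flat_ball p (projp p y) \<delta>) (H y)"
begin

lemma M_pos: "0 < M"
  using K by linarith

lemma chart_eq:
  assumes y: "y \<in> V \<inter> Q" and z: "z \<in> V" "projp p z \<in> flat_ball p (projp p y) \<delta>"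
    and fibre: "infnorm ((z - projp p z) - (y - projp p y)) < M * \<delta>"
  shows "H y (projp p z) = z - projp p z"
proof -
  have "z \<in> V \<inter> cylinder p M y \<delta>" using z fibre by (simp add: cylinder_def flat_ball_def)
  then obtain u where u: "u \<in> flat_ball p (projp p y) \<delta>" "z = u + H y u"
    using chart_graph[OF y] unfolding graph_def by blast
  then have "projp p z = u"
    using projp_graph_point[OF chart_lip[OF y]] by (simp add: flat_ball_def)
  then show ?thesis using u by simp
qed

lemma chart_centre: "y \<in> V \<inter> Q \<Longrightarrow> H y (projp p y) = y - projp p y"
  using chart_eq[of y y] K \<delta> by (simp add: centre_in_flat_ball infnorm_0)

lemma chart_in: "y \<in> V \<inter> Q \<Longrightarrow> u \<in> flat_ball p (projp p y) \<delta> \<Longrightarrow> u + H y u \<in> V"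
  using chart_graph unfolding graph_def by blast

text \<open>Near u, use the chart centred at the sheet point above \<open>\<rho> u\<close>; charts centred at
  nearby sheet points agree because \<open>2 K < M\<close>.\<close>

lemma continuation_step:
  assumes E: "convex E" "\<And>u. u \<in> E \<Longrightarrow> projp p u = u" "E0 \<subseteq> E"
    and \<rho>: "\<And>u. u \<in> E \<Longrightarrow> \<rho> u \<in> E0 \<and> infnorm (u - \<rho> u) \<le> \<delta> / 2" "\<And>u. u \<in> E0 \<Longrightarrow> \<rho> u = u"
    and g: "lip_map p K E0 g" "\<And>u. u \<in> E0 \<Longrightarrow> u + g u \<in> V \<inter> Q"
  obtains g' where "lip_map p K E g'" "\<And>u. u \<in> E0 \<Longrightarrow> g' u = g u" "\<And>u. u \<in> E \<Longrightarrow> u + g' u \<in> V"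
proof
  define Y where "Y u = \<rho> u + g (\<rho> u)" for u
  define g' where "g' u = H (Y u) u" for u
  have Y: "Y u \<in> V \<inter> Q" "projp p (Y u) = \<rho> u" if "u \<in> E" for u
    using g(2) \<rho>(1)[OF that] projp_graph_point[OF g(1)] E(2,3) that by (auto simp: Y_def)
  have HY: "H (Y u) (\<rho> u) = g (\<rho> u)" if "u \<in> E" for u
    using chart_centre[OF Y(1)[OF that]] Y(2)[OF that] by (simp add: Y_def)
  have near: "v \<in> flat_ball p (projp p (Y u)) \<delta>" if "u \<in> E" "v \<in> E" "infnorm (u - v) < \<delta> / 4" for u v
  proof -
    have "infnorm (v - \<rho> u) \<le> infnorm (v - u) + infnorm (u - \<rho> u)"
      using infnorm_triangle[of "v - u" "u - \<rho> u"] by simp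
    also have "\<dots> < \<delta>" using that(3) \<rho>(1)[OF that(1)] infnorm_sub[of v u] \<delta> by linarith
    finally show ?thesis using that E(2) Y(2) by (simp add: flat_ball_def)
  qed
  have agree: "g' v = H (Y u) v" if uv: "u \<in> E" "v \<in> E" "infnorm (u - v) < \<delta> / 4" for u v
  proof -
    have "\<rho> v \<in> E" using \<rho>(1) uv(2) E(3) by blast
    then have v: "v \<in> flat_ball p (projp p (Y v)) \<delta>" "\<rho> v \<in> flat_ball p (projp p (Y v)) \<delta>"
      using near[of v v] uv(2) \<delta> Y(2) centre_in_flat_ball[OF E(2)] by (auto simp: infnorm_0)
    have "infnorm (g' v - g (\<rho> v)) \<le> K * infnorm (v - \<rho> v)"
      using lip_map_le[OF chart_lip[OF Y(1)] v] HY uv(2) by (simp add: g'_def)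
    also have "\<dots> \<le> K * (\<delta> / 2)" using \<rho>(1)[OF uv(2)] K by (intro mult_left_mono) auto
    finally have 1: "infnorm (g' v - g (\<rho> v)) \<le> K * (\<delta> / 2)" .
    have "infnorm (\<rho> v - \<rho> u) \<le> infnorm (\<rho> v - v) + infnorm (v - u) + infnorm (u - \<rho> u)"
      using infnorm_triangle[of "\<rho> v - v" "v - u"] infnorm_triangle[of "\<rho> v - u" "u - \<rho> u"] by simp
    also have "\<dots> \<le> 5 / 4 * \<delta>"
      using \<rho>(1)[OF uv(1)] \<rho>(1)[OF uv(2)] uv(3) infnorm_sub[of "\<rho> v" v] infnorm_sub[of v u]
      by linarith
    finally have "infnorm (g (\<rho> v) - g (\<rho> u)) \<le> K * (5 / 4 * \<delta>)"
      using lip_map_le[OF g(1)] \<rho>(1) uv K by (meson mult_left_mono order_trans)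
    moreover have "2 * K * \<delta> < M * \<delta>" using K \<delta> by simp
    ultimately have "infnorm (g' v - g (\<rho> u)) < M * \<delta>"
      using 1 infnorm_triangle[of "g' v - g (\<rho> v)" "g (\<rho> v) - g (\<rho> u)"]
        mult_nonneg_nonneg[OF K(1) less_imp_le[OF \<delta>]] by simp
    moreover have "v + g' v \<in> V" using chart_in[OF Y(1) v(1)] uv(2) by (simp add: g'_def)
    moreover have "projp p (v + g' v) = v"
      using projp_graph_point[OF chart_lip[OF Y(1)] v(1)] uv(2) E(2) by (simp add: g'_def)
    ultimately show ?thesis
      using chart_eq[OF Y(1)[OF uv(1)], of "v + g' v"] near[OF uv] Y(2)[OF uv(1)] by (simp add: Y_def)
  qed
  have centre: "u \<in> flat_ball p (projp p (Y u)) \<delta>" if "u \<in> E" for u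
    using near[OF that that] \<delta> by (simp add: infnorm_0)
  show "lip_map p K E g'"
    unfolding lip_map_iff
  proof (intro conjI ballI)
    show "projp p (g' u) = 0" if "u \<in> E" for u
      using lip_map_projp[OF chart_lip[OF Y(1)[OF that]] centre[OF that]] by (simp add: g'_def)
    show "infnorm (g' u - g' v) \<le> K * infnorm (u - v)" if "u \<in> E" "v \<in> E" for u v
    proof (rule infnorm_lipschitz_of_local[OF E(1) _ K(1) _ that])
      fix u v assume uv: "u \<in> E" "v \<in> E" "infnorm (u - v) < \<delta> / 4"
      have "infnorm (H (Y u) u - H (Y u) v) \<le> K * infnorm (u - v)"
        by (rule lip_map_le[OF chart_lip[OF Y(1)[OF uv(1)]] centre[OF uv(1)] near[OF uv]])
      then show "infnorm (g' u - g' v) \<le> K * infnorm (u - v)"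
        using agree[OF uv] by (simp only: g'_def[of u])
    qed (use \<delta> in simp)
  qed
  show "g' u = g u" if "u \<in> E0" for u
    using HY[of u] \<rho>(2)[OF that] that E(3) by (auto simp: g'_def)
  show "u + g' u \<in> V" if "u \<in> E" for u
    using chart_in[OF Y(1)[OF that] centre[OF that]] by (simp add: g'_def)
qed

lemma continuation:
  assumes B: "convex B" "\<And>u. u \<in> B \<Longrightarrow> projp p u = u"
    and R: "\<And>u v. u \<in> B \<Longrightarrow> v \<in> B \<Longrightarrow> infnorm (u - v) \<le> R"
    and y0: "y0 \<in> V" "projp p y0 \<in> B"
    and Q: "\<And>u w. u \<in> B \<Longrightarrow> projp p w = 0 \<Longrightarrow> infnorm (w - (y0 - projp p y0)) \<le> K * R \<Longrightarrow> u + w \<in> Q"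
  obtains g where "lip_map p K B g" "g (projp p y0) = y0 - projp p y0" "\<And>u. u \<in> B \<Longrightarrow> u + g u \<in> V"
proof -
  define u0 where "u0 = projp p y0"
  define w0 where "w0 = y0 - projp p y0"
  define D where "D r = B \<inter> {u. infnorm (u - u0) \<le> r}" for r
  have u0: "u0 \<in> B" using y0 by (simp add: u0_def)
  have "\<exists>g. lip_map p K (D (real k * (\<delta> / 2))) g \<and> g u0 = w0 \<and> (\<forall>u\<in>D (real k * (\<delta> / 2)). u + g u \<in> V)"
    for k
  proof (induction k)
    case 0
    have "infnorm (u - u0) \<le> 0 \<longleftrightarrow> u = u0" for u
      using infnorm_pos_le[of "u - u0"] infnorm_eq_0[of "u - u0"] by auto
    then have "D 0 = {u0}" using u0 by (auto simp: D_def)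
    moreover have "lip_map p K {u0} (\<lambda>_. w0)" using K by (simp add: lip_map_iff w0_def infnorm_0)
    ultimately show ?case using y0 by (auto simp: u0_def w0_def)
  next
    case (Suc k)
    define r where "r = real k * (\<delta> / 2)"
    have r: "r \<ge> 0" "real (Suc k) * (\<delta> / 2) = r + \<delta> / 2" using \<delta> by (auto simp: r_def algebra_simps)
    obtain g where g: "lip_map p K (D r) g" "g u0 = w0" "\<And>u. u \<in> D r \<Longrightarrow> u + g u \<in> V"
      using Suc.IH unfolding r_def by blast
    obtain \<rho> where \<rho>: "\<And>u. u \<in> B \<Longrightarrow> infnorm (u - u0) \<le> r + \<delta> / 2 \<Longrightarrow>
        \<rho> u \<in> B \<and> infnorm (\<rho> u - u0) \<le> r \<and> infnorm (u - \<rho> u) \<le> \<delta> / 2"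
      "\<And>u. infnorm (u - u0) \<le> r \<Longrightarrow> \<rho> u = u"
      using radial_retraction[OF B(1) u0 r(1), of "\<delta> / 2"] \<delta> by auto
    have u0D: "u0 \<in> D r" using r u0 by (simp add: D_def infnorm_0)
    have gQ: "u + g u \<in> Q" if "u \<in> D r" for u
    proof (rule Q)
      have "infnorm (g u - g u0) \<le> K * infnorm (u - u0)" by (rule lip_map_le[OF g(1) that u0D])
      also have "\<dots> \<le> K * R" using R that u0 K by (intro mult_left_mono) (auto simp: D_def)
      finally show "infnorm (g u - (y0 - projp p y0)) \<le> K * R" using g(2) by (simp add: w0_def)
    qed (use that lip_map_projp[OF g(1) that] in \<open>simp_all add: D_def\<close>)
    obtain g' where g': "lip_map p K (D (r + \<delta> / 2)) g'" "\<And>u. u \<in> D r \<Longrightarrow> g' u = g u"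
        "\<And>u. u \<in> D (r + \<delta> / 2) \<Longrightarrow> u + g' u \<in> V"
    proof (rule continuation_step[of "D (r + \<delta> / 2)" "D r" \<rho> g])
      show "convex (D (r + \<delta> / 2))" unfolding D_def by (intro convex_Int B(1) convex_infnorm_le)
      show "\<rho> u \<in> D r \<and> infnorm (u - \<rho> u) \<le> \<delta> / 2" if "u \<in> D (r + \<delta> / 2)" for u
        using \<rho>(1) that by (simp add: D_def)
      show "D r \<subseteq> D (r + \<delta> / 2)" using \<delta> by (auto simp: D_def)
      show "u + g u \<in> V \<inter> Q" if "u \<in> D r" for u using g(3) gQ that by blast
    qed (use B(2) \<rho>(2) g(1) in \<open>simp_all add: D_def\<close>)
    have "g' u0 = w0" using g'(2)[OF u0D] g(2) by simp
    with g' show ?case unfolding r(2) by blast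
  qed
  moreover obtain k :: nat where "R / (\<delta> / 2) \<le> real k" using real_arch_simple by blast
  then have "R \<le> real k * (\<delta> / 2)" using \<delta> by (simp add: field_simps)
  then have "D (real k * (\<delta> / 2)) = B" using R[OF _ u0] by (force simp: D_def)
  ultimately show thesis using that unfolding u0_def w0_def by blast
qed

lemma component_eq_graph:
  assumes B: "connected B" "\<And>u. u \<in> B \<Longrightarrow> projp p u = u"
    and g: "lip_map p K B g" "\<And>u. u \<in> B \<Longrightarrow> u + g u \<in> V \<inter> \<Omega>"
    and \<Omega>: "\<Omega> \<subseteq> Q" "\<And>z. z \<in> \<Omega> \<Longrightarrow> projp p z \<in> B"
    and y0: "y0 \<in> graph B g"
  shows "connected_component_set (V \<inter> \<Omega>) y0 = graph B g"
proof
  let ?S = "V \<inter> \<Omega>" and ?G = "graph B g"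
  have G: "?G = (\<lambda>u. u + g u) ` B" unfolding graph_def by (simp add: setcompr_eq_image)
  have GS: "?G \<subseteq> ?S" unfolding G using g(2) by blast
  have on_graph: "w \<in> ?G \<longleftrightarrow> g (projp p w) = w - projp p w" if "w \<in> ?S" for w
  proof
    assume "w \<in> ?G"
    then obtain u where u: "u \<in> B" "w = u + g u" unfolding G by blast
    then show "g (projp p w) = w - projp p w" using projp_graph_point[OF g(1) u(1) B(2)[OF u(1)]] by simp
  next
    assume "g (projp p w) = w - projp p w"
    then have "w = projp p w + g (projp p w)" by simp
    then show "w \<in> ?G" unfolding G using \<Omega>(2) that by (metis IntD2 rev_image_eqI)
  qed
  have contg: "continuous_on B g" by (rule lip_map_continuous_on[OF g(1) K(1)])
  have "connected ?G" unfolding G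
    by (intro connected_continuous_image B(1) continuous_on_add continuous_on_id contg)
  then show "?G \<subseteq> connected_component_set ?S y0"
    by (rule connected_component_maximal[OF y0 _ GS])
  have "closedin (top_of_set ?S) {w \<in> ?S. g (projp p w) - (w - projp p w) = 0}"
    by (intro continuous_closedin_preimage_constant continuous_intros
        continuous_on_compose2[OF contg]) (use \<Omega>(2) in auto)
  moreover have "{w \<in> ?S. g (projp p w) - (w - projp p w) = 0} = ?G"
    using on_graph GS by auto
  ultimately have closed: "closedin (top_of_set ?S) ?G" by simp
  have "?S \<inter> (\<Union>z\<in>?G. cylinder p M z \<delta>) = ?G"
  proof (intro equalityI subsetI)
    fix w assume "w \<in> ?S \<inter> (\<Union>z\<in>?G. cylinder p M z \<delta>)"
    then obtain z where w: "w \<in> ?S" "w \<in> cylinder p M z \<delta>" and z: "z \<in> ?G" by blast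
    define v where "v = projp p w"
    have zQ: "z \<in> V \<inter> Q" using z GS \<Omega>(1) by blast
    have v: "v \<in> B" "v \<in> flat_ball p (projp p z) \<delta>"
      using w \<Omega>(2) by (auto simp: v_def cylinder_def flat_ball_def)
    have "projp p z \<in> B" "g (projp p z) = z - projp p z" using on_graph z GS \<Omega>(2) by auto
    then have "v + g v \<in> cylinder p M z \<delta>"
      using graph_in_cylinder[OF g(1)] v K by simp
    then have "H z v = g v"
      using chart_eq[OF zQ, of "v + g v"] g(2)[OF v(1)] projp_graph_point[OF g(1) v(1) B(2)[OF v(1)]] v(2)
      by (simp add: cylinder_def)
    moreover have "H z v = w - v" using chart_eq[OF zQ, of w] w v(2) by (simp add: v_def cylinder_def)
    ultimately show "w \<in> ?G" using on_graph w(1) by (simp add: v_def)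
  next
    fix w assume "w \<in> ?G"
    moreover have "w \<in> cylinder p M w \<delta>" by (rule centre_in_cylinder[OF \<delta> M_pos])
    ultimately show "w \<in> ?S \<inter> (\<Union>z\<in>?G. cylinder p M z \<delta>)" using GS by blast
  qed
  moreover have "open (\<Union>z\<in>?G. cylinder p M z \<delta>)" by (intro open_UN ballI open_cylinder)
  ultimately have "openin (top_of_set ?S) ?G"
    using openin_open_Int[of "\<Union>z\<in>?G. cylinder p M z \<delta>" ?S] by (simp add: Int_commute)
  then show "connected_component_set ?S y0 \<subseteq> ?G"
    by (rule connected_component_subset_clopenin[OF _ closed y0])
qed

end

lemma lipschitz_graph_restrict:
  assumes h: "lip_map p K (flat_ball p (projp p y') d') h"
      "V \<inter> cylinder p M y' d' = graph (flat_ball p (projp p y') d') h"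
    and sub: "cylinder p M y d \<subseteq> cylinder p M y' d'" and y: "y \<in> V"
    and K: "0 \<le> K" "K < M" and d: "d > 0"
  shows "lip_map p K (flat_ball p (projp p y) d) h"
    "V \<inter> cylinder p M y d = graph (flat_ball p (projp p y) d) h"
proof -
  let ?B' = "flat_ball p (projp p y') d'" and ?B = "flat_ball p (projp p y) d"
  have "y \<in> cylinder p M y d" by (rule centre_in_cylinder[OF d]) (use K in linarith)
  then have "y \<in> graph ?B' h" using h(2) sub y by blast
  then obtain v where v: "v \<in> ?B'" "y = v + h v" unfolding graph_def by blast
  then have yv: "projp p y = v" using projp_graph_point[OF h(1) v(1)] by (simp add: flat_ball_def)
  have BB': "?B \<subseteq> ?B'"
  proof
    fix u assume u: "u \<in> ?B"
    define z where "z = u + (y - projp p y)"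
    have pz: "projp p z = u" using u by (simp add: z_def flat_ball_def projp_add)
    have "z \<in> cylinder p M y d" using u pz d K by (simp add: cylinder_def flat_ball_def z_def infnorm_0)
    then show "u \<in> ?B'" using sub pz u by (auto simp: cylinder_def flat_ball_def)
  qed
  show lip: "lip_map p K ?B h" by (rule lip_map_subset[OF h(1) BB'])
  show "V \<inter> cylinder p M y d = graph ?B h"
  proof (intro equalityI subsetI)
    fix z assume z: "z \<in> V \<inter> cylinder p M y d"
    then obtain u where u: "u \<in> ?B'" "z = u + h u" using h(2) sub unfolding graph_def by blast
    then have "projp p z = u" using projp_graph_point[OF h(1) u(1)] by (simp add: flat_ball_def)
    then have "u \<in> ?B" using z u(1) by (simp add: cylinder_def flat_ball_def)
    then show "z \<in> graph ?B h" using u(2) unfolding graph_def by blast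
  next
    fix z assume "z \<in> graph ?B h"
    then obtain u where u: "u \<in> ?B" "z = u + h u" unfolding graph_def by blast
    have "u + h u \<in> V" using h(2) BB' u(1) unfolding graph_def by blast
    moreover have "u + h u \<in> cylinder p M y d"
      using graph_in_cylinder[OF h(1) _ _ BB'[THEN subsetD, OF u(1)] u(1) K] v yv by simp
    ultimately show "z \<in> V \<inter> cylinder p M y d" using u(2) by simp
  qed
qed

lemma C1_submanifold_uniform_atlas:
  fixes V Q :: "(real,'n::{finite,linorder}) vec set"
  assumes man: "C1_submanifold p V" and eb: "eta_bounded p \<eta> V" and \<eta>: "\<eta> \<ge> 0"
    and M: "2 * (real p * \<eta>) < M" and cpt: "compact (V \<inter> Q)"
  obtains \<delta> H where "lipschitz_atlas p (real p * \<eta>) M \<delta> V Q H"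
proof -
  let ?K = "real p * \<eta>"
  have "?K \<ge> 0" using \<eta> by simp
  with M have K: "?K \<ge> 0" "?K < M" by linarith+
  have "\<exists>d h. d > 0 \<and> lip_map p ?K (flat_ball p (projp p y) d) h \<and>
      V \<inter> cylinder p M y d = graph (flat_ball p (projp p y) d) h" if "y \<in> V" for y
    using C1_submanifold_lipschitz_graph[OF man eb \<eta> that K(2)] by blast
  then obtain d where "\<forall>y\<in>V. d y > 0 \<and> (\<exists>h. lip_map p ?K (flat_ball p (projp p y) (d y)) h \<and>
      V \<inter> cylinder p M y (d y) = graph (flat_ball p (projp p y) (d y)) h)"
    by (metis bchoice)
  then obtain h where dh: "\<And>y. y \<in> V \<Longrightarrow> d y > 0"
      "\<And>y. y \<in> V \<Longrightarrow> lip_map p ?K (flat_ball p (projp p y) (d y)) (h y)"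
      "\<And>y. y \<in> V \<Longrightarrow> V \<inter> cylinder p M y (d y) = graph (flat_ball p (projp p y) (d y)) (h y)"
    by (metis bchoice)
  have "y \<in> cylinder p M y (d y)" if "y \<in> V" for y
    by (rule centre_in_cylinder[OF dh(1)[OF that]]) (use K in linarith)
  then have cover: "V \<inter> Q \<subseteq> \<Union>((\<lambda>y. cylinder p M y (d y)) ` (V \<inter> Q))" by blast
  have "open C" if "C \<in> (\<lambda>y. cylinder p M y (d y)) ` (V \<inter> Q)" for C
    using that open_cylinder by blast
  then obtain e where e: "e > 0"
    and "\<And>y. y \<in> V \<inter> Q \<Longrightarrow> \<exists>C \<in> (\<lambda>y. cylinder p M y (d y)) ` (V \<inter> Q). ball y e \<subseteq> C"
    using Heine_Borel_lemma[OF cpt cover] by blast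
  then have "\<exists>y'. y' \<in> V \<inter> Q \<and> ball y e \<subseteq> cylinder p M y' (d y')" if "y \<in> V \<inter> Q" for y
    using that by blast
  then obtain c where c: "\<And>y. y \<in> V \<inter> Q \<Longrightarrow> c y \<in> V \<inter> Q \<and> ball y e \<subseteq> cylinder p M (c y) (d (c y))"
    by metis
  define \<delta> where "\<delta> = e / (sqrt (real CARD('n)) * (M + 1))"
  have \<delta>: "\<delta> > 0" using e K by (simp add: \<delta>_def)
  have cyl_ball: "cylinder p M y \<delta> \<subseteq> ball y e" for y :: "(real,'n) vec"
  proof
    fix z assume "z \<in> cylinder p M y \<delta>"
    then have "infnorm (z - y) < (M + 1) * \<delta>" using cylinder_infnorm_less K by fastforce
    also have "(M + 1) * \<delta> = e / sqrt (real CARD('n))" using K by (simp add: \<delta>_def)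
    finally have "sqrt (real CARD('n)) * infnorm (z - y) < e" by (simp add: field_simps)
    then show "z \<in> ball y e"
      using norm_le_sqrt_card_infnorm[of "z - y"] by (simp add: dist_norm norm_minus_commute)
  qed
  have "lipschitz_atlas p ?K M \<delta> V Q (\<lambda>y. h (c y))"
  proof
    fix y assume y: "y \<in> V \<inter> Q"
    have "cylinder p M y \<delta> \<subseteq> cylinder p M (c y) (d (c y))" using cyl_ball c[OF y] by blast
    note restrict = lipschitz_graph_restrict[OF dh(2,3) this _ K \<delta>] c[OF y] y
    show "lip_map p ?K (flat_ball p (projp p y) \<delta>) (h (c y))" using restrict by blast
    show "V \<inter> cylinder p M y \<delta> = graph (flat_ball p (projp p y) \<delta>) (h (c y))" using restrict by blast
  qed (use K M \<delta> in auto)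
  then show thesis by (rule that)
qed

definition split_box :: "nat \<Rightarrow> (real,'n) vec \<Rightarrow> real \<Rightarrow> real \<Rightarrow> (real,'n::{finite,linorder}) vec set" where
  "split_box p x w h = box (x - (\<chi> i. if i \<in> firstp p then w else h)) (x + (\<chi> i. if i \<in> firstp p then w else h))"

lemma mem_split_box:
  assumes "w > 0" "h > 0"
  shows "z \<in> split_box p x w h \<longleftrightarrow>
    infnorm (projp p z - projp p x) < w \<and> infnorm ((z - projp p z) - (x - projp p x)) < h"
proof -
  have "z \<in> split_box p x w h \<longleftrightarrow> (\<forall>i. \<bar>z$i - x$i\<bar> < (if i \<in> firstp p then w else h))"
    unfolding split_box_def mem_box_cart by (auto simp: abs_less_iff algebra_simps)
  then show ?thesis unfolding infnorm_less_iff_cart using assms by (auto split: if_splits)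
qed

lemma centre_in_split_box: "w > 0 \<Longrightarrow> h > 0 \<Longrightarrow> x \<in> split_box p x w h"
  by (simp add: mem_split_box infnorm_0)

lemma projp_split_box:
  assumes "w > 0" "h > 0"
  shows "projp p ` split_box p x w h = flat_ball p (projp p x) w"
proof (intro equalityI subsetI)
  fix u assume "u \<in> projp p ` split_box p x w h"
  then show "u \<in> flat_ball p (projp p x) w" using assms by (auto simp: mem_split_box flat_ball_def)
next
  fix u assume u: "u \<in> flat_ball p (projp p x) w"
  define z where "z = u + (x - projp p x)"
  have "projp p z = u" using u by (simp add: z_def flat_ball_def projp_add)
  moreover have "z \<in> split_box p x w h"
    using u assms \<open>projp p z = u\<close> by (simp add: mem_split_box flat_ball_def z_def infnorm_0)
  ultimately show "u \<in> projp p ` split_box p x w h" by (metis imageI)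
qed

lemma (in lipschitz_atlas) sheet_through:
  assumes Q: "Q = {z. infnorm (z - x) \<le> r}" and w: "0 < w" "w \<le> r" and h: "h \<le> r" "6 * K * w < h"
    and y: "y \<in> V \<inter> split_box p x (w / 2) (h / 3)"
  obtains g where "lip_map p K (flat_ball p (projp p x) w) g"
    "\<And>u. u \<in> flat_ball p (projp p x) w \<Longrightarrow> u + g u \<in> V \<and> infnorm (g u - (x - projp p x)) < h"
    "connected_component_set (V \<inter> split_box p x w h) y = graph (flat_ball p (projp p x) w) g"
proof -
  let ?B = "flat_ball p (projp p x) w" and ?\<Omega> = "split_box p x w h"
  have h0: "h > 0" using h K w by (smt (verit) mult_nonneg_nonneg)
  have y1: "infnorm (projp p y - projp p x) < w / 2"
    and y2: "infnorm ((y - projp p y) - (x - projp p x)) < h / 3"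
    using y w h0 by (auto simp: mem_split_box)
  have Kw: "K * (2 * w) < h / 3" using h(2) by (simp add: field_simps)
  have yB: "projp p y \<in> ?B" using y1 infnorm_pos_le[of "projp p y - projp p x"] by (simp add: flat_ball_def)
  have flat: "projp p u = u" if "u \<in> ?B" for u using that by (simp add: flat_ball_def)
  have diam: "infnorm (u - v) \<le> 2 * w" if "u \<in> ?B" "v \<in> ?B" for u v
    using that infnorm_triangle[of "u - projp p x" "projp p x - v"] infnorm_sub[of v "projp p x"]
    by (simp add: flat_ball_def)
  have "u + f \<in> Q" if u: "u \<in> ?B" and f: "projp p f = 0" "infnorm (f - (y - projp p y)) \<le> K * (2 * w)" for u f
  proof -
    have "(u + f - x) - projp p (u + f - x) = (f - (y - projp p y)) + ((y - projp p y) - (x - projp p x))"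
      using flat[OF u] f(1) by (simp add: projp_add projp_diff algebra_simps)
    then have "infnorm ((u + f - x) - projp p (u + f - x))
        \<le> infnorm (f - (y - projp p y)) + infnorm ((y - projp p y) - (x - projp p x))"
      by (metis infnorm_triangle)
    also have "\<dots> < r" using f(2) y2 h h0 Kw by linarith
    finally have "infnorm ((u + f - x) - projp p (u + f - x)) < r" .
    moreover have "infnorm (projp p (u + f - x)) < r"
      using u f(1) w by (simp add: projp_add projp_diff flat_ball_def)
    ultimately show ?thesis using infnorm_le_max_projp[of "u + f - x" p] by (simp add: Q)
  qed
  then obtain g where g: "lip_map p K ?B g" "g (projp p y) = y - projp p y" "\<And>u. u \<in> ?B \<Longrightarrow> u + g u \<in> V"
    using continuation[OF convex_flat_ball flat diam _ yB] y by blast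
  have band: "infnorm (g u - (x - projp p x)) < h" if u: "u \<in> ?B" for u
  proof -
    have "g u - (x - projp p x) = (g u - g (projp p y)) + ((y - projp p y) - (x - projp p x))"
      using g(2) by simp
    then have "infnorm (g u - (x - projp p x))
        \<le> infnorm (g u - g (projp p y)) + infnorm ((y - projp p y) - (x - projp p x))"
      by (metis infnorm_triangle)
    moreover have "infnorm (g u - g (projp p y)) \<le> K * (2 * w)"
      using lip_map_le[OF g(1) u yB] diam[OF u yB] K(1) by (meson mult_left_mono order_trans)
    ultimately show ?thesis using y2 Kw h0 by linarith
  qed
  have g\<Omega>: "u + g u \<in> V \<inter> ?\<Omega>" if u: "u \<in> ?B" for u
    using g(3)[OF u] band[OF u] u projp_graph_point[OF g(1) u flat[OF u]] w h0
    by (simp add: mem_split_box flat_ball_def)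
  have "?\<Omega> \<subseteq> Q"
  proof
    fix z assume "z \<in> ?\<Omega>"
    then have "infnorm (projp p (z - x)) < w" "infnorm ((z - x) - projp p (z - x)) < h"
      using w h0 by (simp_all add: mem_split_box projp_diff algebra_simps)
    then show "z \<in> Q" using infnorm_le_max_projp[of "z - x" p] w h by (simp add: Q)
  qed
  moreover have "projp p z \<in> ?B" if "z \<in> ?\<Omega>" for z using that w h0 by (simp add: mem_split_box flat_ball_def)
  moreover have "y \<in> graph ?B g" unfolding graph_def using yB g(2) by force
  ultimately have "connected_component_set (V \<inter> ?\<Omega>) y = graph ?B g"
    using component_eq_graph[OF convex_connected[OF convex_flat_ball] flat g(1) g\<Omega>] by blast
  then show thesis using that g(1) g(3) band by blast
qed

lemma finite_set_eq_image_atLeastAtMost: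
  assumes "finite A" "A \<noteq> {}" "card A \<le> n"
  obtains e :: "nat \<Rightarrow> 'a" where "e ` {1..n} = A"
proof -
  obtain f where f: "bij_betw f {0..<card A} A" using ex_bij_betw_nat_finite[OF assms(1)] by blast
  have c: "card A > 0" using assms by (simp add: card_gt_0_iff)
  define e where "e k = f (min (k - 1) (card A - 1))" for k
  have "e ` {1..n} \<subseteq> A" using f c by (auto simp: e_def bij_betw_def)
  moreover have "A \<subseteq> e ` {1..n}"
  proof
    fix a assume "a \<in> A"
    then obtain j where "j \<in> {0..<card A}" "a = f j" using f by (metis bij_betw_def imageE)
    then have "e (Suc j) = a" "Suc j \<in> {1..n}" using assms(3) by (auto simp: e_def)
    then show "a \<in> e ` {1..n}" by (metis imageI)
  qed
  ultimately show thesis using that by blast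
qed

definition sheet_family ::
    "nat \<Rightarrow> real \<Rightarrow> (real,'n) vec \<Rightarrow> real \<Rightarrow> real \<Rightarrow> (real,'n::{finite,linorder}) vec set \<Rightarrow> nat \<Rightarrow>
      (nat \<Rightarrow> (real,'n) vec \<Rightarrow> (real,'n) vec) \<Rightarrow> bool" where
  "sheet_family p K x w h V \<nu> G \<longleftrightarrow>
     (\<forall>k\<in>{1..\<nu>}. lip_map p K (flat_ball p (projp p x) w) (G k) \<and>
        (\<forall>u\<in>flat_ball p (projp p x) w. u + G k u \<in> V \<and> infnorm (G k u - (x - projp p x)) < h)) \<and>
     V \<inter> split_box p x (w / 2) (h / 3) \<subseteq> (\<Union>k\<in>{1..\<nu>}. graph (flat_ball p (projp p x) w) (G k))"

text \<open>Each component of \<open>V\<close> in the box through a point of the half-size box is a single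
  sheet over the whole base, so at most \<open>\<nu>\<close> sheets cover \<open>V\<close> in the half-size box.\<close>

lemma C1_submanifold_sheets:
  fixes V :: "(real,'n::{finite,linorder}) vec set"
  assumes man: "C1_submanifold p V" and eb: "eta_bounded p \<eta> V" and \<eta>: "\<eta> \<ge> 0"
    and cpt: "compact (V \<inter> {z. infnorm (z - x) \<le> r})"
    and w: "0 < w" "w \<le> r" and h: "h \<le> r" "6 * (real p * \<eta>) * w < h"
    and comps: "finite (components (V \<inter> split_box p x w h))"
      "card (components (V \<inter> split_box p x w h)) \<le> \<nu>"
    and ne: "V \<inter> split_box p x (w / 2) (h / 3) \<noteq> {}"
  obtains G where "sheet_family p (real p * \<eta>) x w h V \<nu> G"
proof -
  let ?K = "real p * \<eta>" and ?B = "flat_ball p (projp p x) w"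
  let ?P = "\<lambda>g. lip_map p ?K ?B g \<and> (\<forall>u\<in>?B. u + g u \<in> V \<and> infnorm (g u - (x - projp p x)) < h)"
  have h0: "h > 0" using h w \<eta> by (smt (verit) mult_nonneg_nonneg of_nat_0_le_iff)
  have sub: "split_box p x (w / 2) (h / 3) \<subseteq> split_box p x w h"
    using w h0 by (auto simp: mem_split_box)
  have M: "2 * ?K < 2 * ?K + 1" by simp
  obtain \<delta> Hc where "lipschitz_atlas p ?K (2 * ?K + 1) \<delta> V {z. infnorm (z - x) \<le> r} Hc"
    using C1_submanifold_uniform_atlas[OF man eb \<eta> M cpt] by blast
  then interpret lipschitz_atlas p ?K "2 * ?K + 1" \<delta> V "{z. infnorm (z - x) \<le> r}" Hc .
  define Sh where "Sh = connected_component_set (V \<inter> split_box p x w h) ` (V \<inter> split_box p x (w / 2) (h / 3))"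
  have "\<forall>S\<in>Sh. \<exists>g. ?P g \<and> S = graph ?B g"
  proof
    fix S assume "S \<in> Sh"
    obtain y where y: "y \<in> V \<inter> split_box p x (w / 2) (h / 3)"
      and S: "S = connected_component_set (V \<inter> split_box p x w h) y"
      using \<open>S \<in> Sh\<close> by (auto simp: Sh_def)
    obtain g where "lip_map p ?K ?B g"
      "\<And>u. u \<in> ?B \<Longrightarrow> u + g u \<in> V \<and> infnorm (g u - (x - projp p x)) < h"
      "connected_component_set (V \<inter> split_box p x w h) y = graph ?B g"
      using sheet_through[OF refl w h y] by blast
    then show "\<exists>g. ?P g \<and> S = graph ?B g" using S by blast
  qed
  then obtain gS where gS: "\<forall>S\<in>Sh. ?P (gS S) \<and> S = graph ?B (gS S)" by (rule bchoice[THEN exE])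
  have Sh_sub: "Sh \<subseteq> components (V \<inter> split_box p x w h)"
  proof
    fix S assume "S \<in> Sh"
    then obtain y where "y \<in> V \<inter> split_box p x (w / 2) (h / 3)"
      "S = connected_component_set (V \<inter> split_box p x w h) y" by (auto simp: Sh_def)
    then show "S \<in> components (V \<inter> split_box p x w h)" using sub by (blast intro: componentsI)
  qed
  have "finite Sh" by (rule finite_subset[OF Sh_sub comps(1)])
  moreover have "Sh \<noteq> {}" using ne by (simp add: Sh_def)
  moreover have "card Sh \<le> \<nu>" using card_mono[OF comps(1) Sh_sub] comps(2) by linarith
  ultimately obtain e where e: "e ` {1..\<nu>} = Sh" by (rule finite_set_eq_image_atLeastAtMost)
  have G: "?P (gS (e k)) \<and> e k = graph ?B (gS (e k))" if "k \<in> {1..\<nu>}" for k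
  proof -
    have "e k \<in> Sh" using e that by blast
    then show ?thesis using gS by blast
  qed
  have "V \<inter> split_box p x (w / 2) (h / 3) \<subseteq> (\<Union>k\<in>{1..\<nu>}. graph ?B (gS (e k)))"
  proof
    fix y assume y: "y \<in> V \<inter> split_box p x (w / 2) (h / 3)"
    then have "y \<in> connected_component_set (V \<inter> split_box p x w h) y" using sub by auto
    moreover have "connected_component_set (V \<inter> split_box p x w h) y \<in> e ` {1..\<nu>}"
      using e y by (simp add: Sh_def)
    then obtain k where "k \<in> {1..\<nu>}" "e k = connected_component_set (V \<inter> split_box p x w h) y"
      by (metis imageE)
    ultimately show "y \<in> (\<Union>k\<in>{1..\<nu>}. graph ?B (gS (e k)))" using G by blast
  qed
  then have "sheet_family p ?K x w h V \<nu> (\<lambda>k. gS (e k))"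
    unfolding sheet_family_def using G by blast
  then show thesis by (rule that)
qed

lemma infdist_lessE:
  assumes "A \<noteq> {}" "infdist x A < e"
  obtains a where "a \<in> A" "dist x a < e"
proof -
  have "bdd_below ((\<lambda>a. dist x a) ` A)" by (rule bdd_belowI[of _ 0]) auto
  then show thesis using assms that unfolding infdist_def by (auto simp: cINF_less_iff)
qed

lemma infdist_le_SUP_infdist:
  fixes S T :: "'a::metric_space set"
  assumes "bounded S" "T \<noteq> {}" "a \<in> S"
  shows "infdist a T \<le> (SUP a\<in>S. infdist a T)"
proof (rule cSUP_upper[OF assms(3)])
  obtain t where t: "t \<in> T" using assms(2) by blast
  obtain e where e: "\<And>s. s \<in> S \<Longrightarrow> dist t s \<le> e" using assms(1) bounded_any_center by metis
  show "bdd_above ((\<lambda>a. infdist a T) ` S)"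
    by (rule bdd_aboveI2[of _ _ e]) (metis e infdist_le[OF t] dist_commute order_trans)
qed

lemma infdist_le_hdist_left:
  "bounded S \<Longrightarrow> T \<noteq> {} \<Longrightarrow> a \<in> S \<Longrightarrow> infdist a T \<le> hdist S T"
  unfolding hdist_def by (rule max.coboundedI1[OF infdist_le_SUP_infdist])

lemma infdist_le_hdist_right:
  "bounded T \<Longrightarrow> S \<noteq> {} \<Longrightarrow> b \<in> T \<Longrightarrow> infdist b S \<le> hdist S T"
  unfolding hdist_def by (rule max.coboundedI2[OF infdist_le_SUP_infdist])

lemma hlim_eventually_near:
  fixes A :: "nat \<Rightarrow> 'a::metric_space set"
  assumes h: "hlim A C" and z: "z \<in> C" and e: "e > 0"
  shows "\<forall>\<^sub>F i in sequentially. \<exists>a\<in>A i. dist a z < e"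
proof -
  have C: "compact C" "\<forall>\<^sub>F i in sequentially. A i \<noteq> {}" "(\<lambda>i. hdist (closure (A i)) C) \<longlonglongrightarrow> 0"
    using h z unfolding hlim_def by auto
  have "\<forall>\<^sub>F i in sequentially. hdist (closure (A i)) C < e / 2"
    by (rule order_tendstoD(2)[OF C(3)]) (use e in simp)
  with C(2) show ?thesis
  proof eventually_elim
    case (elim i)
    then have "infdist z (closure (A i)) < e / 2"
      using infdist_le_hdist_right[OF compact_imp_bounded[OF C(1)] _ z, of "closure (A i)"] by simp
    moreover have "closure (A i) \<noteq> {}" using elim by simp
    ultimately obtain a where a: "a \<in> closure (A i)" "dist z a < e / 2"
      using infdist_lessE by blast
    moreover obtain a' where "a' \<in> A i" "dist a' a < e / 2"
      using a(1) e unfolding closure_approachable by (metis half_gt_zero)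
    ultimately show ?case using dist_triangle_half_l[of a' a e z] by (auto simp: dist_commute)
  qed
qed

lemma hlim_limit_mem:
  fixes A :: "nat \<Rightarrow> 'a::metric_space set"
  assumes h: "hlim A C" and s: "strict_mono s" and z: "\<And>n. z n \<in> A (s n)" and lim: "z \<longlonglongrightarrow> l"
  shows "l \<in> C"
proof (cases "C = {}")
  case True
  then have "\<forall>\<^sub>F n in sequentially. A (s n) = {}"
    using h eventually_subseq[OF s] unfolding hlim_def by blast
  then obtain n where "A (s n) = {}" by (meson eventually_sequentially order_refl)
  then show ?thesis using z[of n] by simp
next
  case False
  then have C: "\<And>i. bounded (A i)" "compact C" "(\<lambda>i. hdist (closure (A i)) C) \<longlonglongrightarrow> 0"
    using h unfolding hlim_def by auto
  have "infdist (z n) C \<le> hdist (closure (A (s n))) C" for n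
    using infdist_le_hdist_left[OF bounded_closure[OF C(1)] False] z closure_subset by blast
  moreover have "(\<lambda>n. hdist (closure (A (s n))) C) \<longlonglongrightarrow> 0"
    using LIMSEQ_subseq_LIMSEQ[OF C(3) s] by (simp add: o_def)
  ultimately have "infdist l C \<le> 0"
    using LIMSEQ_le[OF tendsto_infdist[OF lim]] by blast
  then have "infdist l C = 0" using infdist_nonneg[of l C] by linarith
  then show ?thesis
    using in_closure_iff_infdist_zero[OF False] closure_closed[OF compact_imp_closed[OF C(2)]] by simp
qed

lemma hlim_eventually_far:
  fixes A :: "nat \<Rightarrow> 'a::metric_space set"
  assumes h: "hlim A D" and x: "x \<notin> D"
  obtains r where "r > 0" "\<forall>\<^sub>F i in sequentially. A i \<inter> ball x r = {}"
proof (cases "D = {}")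
  case True
  then have "\<forall>\<^sub>F i in sequentially. A i = {}" using h unfolding hlim_def by auto
  then have "\<forall>\<^sub>F i in sequentially. A i \<inter> ball x 1 = {}" by (rule eventually_mono) simp
  then show thesis by (rule that[rotated]) simp
next
  case False
  then have D: "compact D" "(\<lambda>i. hdist (closure (A i)) D) \<longlonglongrightarrow> 0" "\<And>i. bounded (A i)"
    using h unfolding hlim_def by auto
  define d where "d = infdist x D"
  have d: "d > 0" unfolding d_def by (rule infdist_pos_not_in_closed[OF compact_imp_closed[OF D(1)] False x])
  have "\<forall>\<^sub>F i in sequentially. hdist (closure (A i)) D < d / 2"
    by (rule order_tendstoD(2)[OF D(2)]) (use d in simp)
  then have "\<forall>\<^sub>F i in sequentially. A i \<inter> ball x (d / 2) = {}"
  proof eventually_elim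
    case (elim i)
    show ?case
    proof (rule ccontr)
      assume "A i \<inter> ball x (d / 2) \<noteq> {}"
      then obtain a where a: "a \<in> A i" "dist x a < d / 2" by auto
      then have "infdist a D < d / 2"
        using infdist_le_hdist_left[OF bounded_closure[OF D(3)] False, of a] closure_subset elim by force
      then show False using infdist_triangle[of x D a] a(2) unfolding d_def by linarith
    qed
  qed
  moreover have "d / 2 > 0" using d by simp
  ultimately show thesis using that by blast
qed

lemma compact_Int_of_fr_disjoint:
  fixes V Q :: "'a::heine_borel set"
  assumes "bounded V" "closed Q" "fr V \<inter> Q = {}"
  shows "compact (V \<inter> Q)"
proof -
  have "V \<inter> Q = closure V \<inter> Q" using assms(3) closure_subset by (auto simp: fr_def)
  moreover have "compact (closure V \<inter> Q)"
    using assms(1,2) by (simp add: compact_Int_closed compact_closure)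
  ultimately show ?thesis by simp
qed

lemma finite_ex_eq_0_if_arbitrarily_small:
  fixes \<phi> :: "'a \<Rightarrow> real"
  assumes I: "finite I" and nonneg: "\<And>k. k \<in> I \<Longrightarrow> \<phi> k \<ge> 0"
    and small: "\<And>\<epsilon>. \<epsilon> > 0 \<Longrightarrow> \<exists>k\<in>I. \<phi> k < \<epsilon>"
  shows "\<exists>k\<in>I. \<phi> k = 0"
proof (rule ccontr)
  assume "\<not> (\<exists>k\<in>I. \<phi> k = 0)"
  then have pos: "\<forall>k\<in>I. \<phi> k > 0" using nonneg by force
  have "I \<noteq> {}" using small[of 1] by auto
  then have "Min (\<phi> ` I) > 0" using pos I by simp
  then obtain k where "k \<in> I" "\<phi> k < Min (\<phi> ` I)" using small by blast
  then show False using Min_le[of "\<phi> ` I"] I by fastforce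
qed

text \<open>A finite family is treated as one map on \<open>S \<times> I\<close>; distinct indices are at distance
  at least 1 there, so equicontinuity of the family is that of its members.\<close>

lemma Arzela_Ascoli_finite_family:
  fixes F :: "nat \<Rightarrow> nat \<Rightarrow> 'a::euclidean_space \<Rightarrow> 'b::{real_normed_vector,heine_borel}"
  assumes S: "compact S" and I: "finite I"
    and bound: "\<And>n k x. k \<in> I \<Longrightarrow> x \<in> S \<Longrightarrow> norm (F n k x) \<le> B"
    and lip: "\<And>n k. k \<in> I \<Longrightarrow> L-lipschitz_on S (F n k)"
  obtains f r where "strict_mono r" "\<And>k x. k \<in> I \<Longrightarrow> x \<in> S \<Longrightarrow> (\<lambda>n. F (r n) k x) \<longlonglongrightarrow> f k x"
proof -
  define T where "T = S \<times> (real ` I)"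
  define F' where "F' n z = F n (nat \<lfloor>snd z\<rfloor>) (fst z)" for n and z :: "'a \<times> real"
  have F': "F' n (x, real k) = F n k x" for n x k by (simp add: F'_def)
  have memT: "z \<in> T \<longleftrightarrow> (\<exists>x k. z = (x, real k) \<and> x \<in> S \<and> k \<in> I)" for z
    by (cases z) (auto simp: T_def)
  have T: "compact T" unfolding T_def by (intro compact_Times S finite_imp_compact finite_imageI I)
  have bnd: "norm (F' n z) \<le> B" if "z \<in> T" for n z using that bound by (auto simp: memT F')
  have equi: "\<exists>d>0. \<forall>n z'. z' \<in> T \<and> norm (z - z') < d \<longrightarrow> norm (F' n z - F' n z') < e"
    if z: "z \<in> T" and e: "e > 0" for z e
  proof (intro exI conjI allI impI)
    define d where "d = min (1 / 2) (e / (\<bar>L\<bar> + 1))"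
    show "d > 0" using e by (simp add: d_def)
    fix n z' assume z': "z' \<in> T \<and> norm (z - z') < d"
    obtain x k x' k' where xk: "z = (x, real k)" "x \<in> S" "k \<in> I" and xk': "z' = (x', real k')" "x' \<in> S"
      using z z' by (auto simp: memT)
    have zz: "z - z' = (x - x', real k - real k')" by (simp add: xk xk')
    have "norm (real k - real k') \<le> norm (z - z')" "norm (x - x') \<le> norm (z - z')"
      unfolding zz by (rule norm_snd_le, rule norm_fst_le)
    then have kk: "\<bar>real k - real k'\<bar> < 1 / 2" and xx: "norm (x - x') < d" using z' by (auto simp: d_def)
    have "k' = k"
      using kk nat_less_real_le[of k k'] nat_less_real_le[of k' k] by (cases k k' rule: linorder_cases) auto
    moreover have "norm (F n k x - F n k x') \<le> \<bar>L\<bar> * norm (x - x')"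
      using lipschitz_onD[OF lip[OF xk(3)] xk(2) xk'(2)] abs_ge_self[of L]
      by (simp add: dist_norm) (smt (verit) mult_right_mono norm_ge_zero)
    then have "norm (F n k x - F n k x') \<le> \<bar>L\<bar> * d"
      using xx by (smt (verit) abs_ge_zero mult_left_mono)
    moreover have "\<bar>L\<bar> * d < e"
      using e by (simp add: d_def min_def field_simps)
    ultimately show "norm (F' n z - F' n z') < e" by (simp add: xk xk' F')
  qed
  have "\<exists>g (r :: nat \<Rightarrow> nat). strict_mono r \<and> (\<forall>e>0. \<exists>N. \<forall>n z. n \<ge> N \<and> z \<in> T \<longrightarrow> norm (F' (r n) z - g z) < e)"
    by (rule Arzela_Ascoli[OF T bnd equi]) blast+
  then obtain g and r :: "nat \<Rightarrow> nat" where r: "strict_mono r"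
    and g: "\<And>e. 0 < e \<Longrightarrow> \<exists>N. \<forall>n z. n \<ge> N \<and> z \<in> T \<longrightarrow> norm (F' (r n) z - g z) < e"
    by blast
  have conv: "(\<lambda>n. F (r n) k x) \<longlonglongrightarrow> g (x, real k)" if "k \<in> I" "x \<in> S" for k x
  proof (rule LIMSEQ_I)
    fix e :: real assume "e > 0"
    then obtain N where "\<forall>n z. n \<ge> N \<and> z \<in> T \<longrightarrow> norm (F' (r n) z - g z) < e" using g by blast
    moreover have "(x, real k) \<in> T" using that by (auto simp: memT)
    ultimately show "\<exists>N. \<forall>n\<ge>N. norm (F (r n) k x - g (x, real k)) < e" by (metis F')
  qed
  show thesis by (rule that[OF r]) (rule conv; assumption)
qed

lemma lip_map_limit:
  assumes g: "\<And>n. lip_map p K D (g n)" and lim: "\<And>u. u \<in> D \<Longrightarrow> (\<lambda>n. g n u) \<longlonglongrightarrow> f u"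
  shows "lip_map p K D f"
  unfolding lip_map_iff
proof (intro conjI ballI)
  fix u v assume u: "u \<in> D" and v: "v \<in> D"
  have "(\<lambda>n. projp p (g n u)) \<longlonglongrightarrow> projp p (f u)"
    by (rule bounded_linear.tendsto[OF bounded_linear_projp lim[OF u]])
  then have "(\<lambda>n. 0) \<longlonglongrightarrow> projp p (f u)" using lip_map_projp[OF g u] by simp
  then show "projp p (f u) = 0" by (simp add: LIMSEQ_const_iff)
  have "(\<lambda>n. infnorm (g n u - g n v)) \<longlonglongrightarrow> infnorm (f u - f v)"
    by (intro tendsto_intros lim u v)
  then show "infnorm (f u - f v) \<le> K * infnorm (u - v)"
    by (rule LIMSEQ_le_const2) (use lip_map_le[OF g u v] in auto)
qed

text \<open>A limit point \<open>z\<close> is approached by points of \<open>V (s n)\<close>; these lie on sheets over \<open>B\<close>,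
  which converge at \<open>projp p z\<close>.\<close>

lemma hlim_near_limit_sheets:
  fixes V :: "nat \<Rightarrow> (real,'n::{finite,linorder}) vec set"
  assumes C: "hlim V C" and s: "strict_mono s" and I: "finite I"
    and U: "open U" "projp p ` U \<subseteq> B" and B: "\<And>u. u \<in> B \<Longrightarrow> projp p u = u" and K: "K \<ge> 0"
    and G: "\<And>n k. k \<in> I \<Longrightarrow> lip_map p K B (G n k)" "\<And>n. V (s n) \<inter> U \<subseteq> (\<Union>k\<in>I. graph B (G n k))"
    and lim: "\<And>k. k \<in> I \<Longrightarrow> (\<lambda>n. G n k (projp p z)) \<longlonglongrightarrow> f k (projp p z)"
    and z: "z \<in> C \<inter> U" and \<epsilon>: "\<epsilon> > 0"
  shows "\<exists>k\<in>I. infnorm ((z - projp p z) - f k (projp p z)) < \<epsilon>"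
proof -
  define u where "u = projp p z"
  have u: "u \<in> B" using z U(2) by (auto simp: u_def)
  obtain \<rho> where \<rho>: "\<rho> > 0" "ball z \<rho> \<subseteq> U" using U(1) z open_contains_ball by blast
  define d where "d = min \<rho> (\<epsilon> / (2 * (K + 1)))"
  have d: "d > 0" "d \<le> \<rho>" using \<rho> \<epsilon> K by (auto simp: d_def)
  have "(1 + K) * d \<le> (1 + K) * (\<epsilon> / (2 * (K + 1)))" using K by (intro mult_left_mono) (auto simp: d_def)
  also have "\<dots> = \<epsilon> / 2" using K by (simp add: field_simps)
  finally have Kd: "(1 + K) * d \<le> \<epsilon> / 2" .
  have "\<forall>\<^sub>F n in sequentially. \<exists>a\<in>V (s n). dist a z < d"
    using eventually_subseq[OF s hlim_eventually_near[OF C _ d(1)]] z by blast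
  moreover have "\<forall>\<^sub>F n in sequentially. dist (G n k u) (f k u) < \<epsilon> / 2" if "k \<in> I" for k
    using tendstoD[OF lim[OF that], of "\<epsilon> / 2"] \<epsilon> by (simp add: u_def)
  then have "\<forall>\<^sub>F n in sequentially. \<forall>k\<in>I. dist (G n k u) (f k u) < \<epsilon> / 2"
    by (intro eventually_ball_finite[OF I] ballI)
  ultimately have "\<forall>\<^sub>F n in sequentially. (\<exists>a\<in>V (s n). dist a z < d) \<and> (\<forall>k\<in>I. dist (G n k u) (f k u) < \<epsilon> / 2)"
    by (rule eventually_conj)
  then obtain n a where a: "a \<in> V (s n)" "dist a z < d"
    and Gn: "\<And>k. k \<in> I \<Longrightarrow> dist (G n k u) (f k u) < \<epsilon> / 2"
    using eventually_happens'[OF sequentially_bot] by blast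
  have "a \<in> U" using a(2) d(2) \<rho>(2) by (auto simp: dist_commute)
  then obtain k v where k: "k \<in> I" "v \<in> B" "a = v + G n k v" using G(2) a(1) unfolding graph_def by blast
  have "projp p a = v" using projp_graph_point[OF G(1)[OF k(1)] k(2) B[OF k(2)]] k(3) by simp
  then have eq: "(z - u) - f k u = ((z - a) - projp p (z - a)) + (G n k v - G n k u) + (G n k u - f k u)"
    using k(3) by (simp add: u_def projp_diff algebra_simps)
  have za: "infnorm (z - a) < d" using a(2) infnorm_le_norm[of "z - a"] by (simp add: dist_norm norm_minus_commute)
  then have t1: "infnorm ((z - a) - projp p (z - a)) < d" using infnorm_fibre_le[of "z - a" p] by linarith
  have "infnorm (G n k v - G n k u) \<le> K * infnorm (projp p (a - z))"
    using lip_map_le[OF G(1)[OF k(1)] k(2) u] \<open>projp p a = v\<close> by (simp add: u_def projp_diff)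
  also have "\<dots> \<le> K * d"
    using infnorm_projp_le[of p "a - z"] za K by (simp add: infnorm_sub mult_left_mono)
  finally have t2: "infnorm (G n k v - G n k u) \<le> K * d" .
  have t3: "infnorm (G n k u - f k u) < \<epsilon> / 2"
    using Gn[OF k(1)] infnorm_le_norm[of "G n k u - f k u"] by (simp add: dist_norm)
  have "infnorm ((z - u) - f k u)
      \<le> infnorm ((z - a) - projp p (z - a)) + infnorm (G n k v - G n k u) + infnorm (G n k u - f k u)"
    unfolding eq using infnorm_triangle[of "(z - a) - projp p (z - a)" "G n k v - G n k u"]
      infnorm_triangle[of "(z - a) - projp p (z - a) + (G n k v - G n k u)" "G n k u - f k u"]
    by linarith
  moreover have "d + K * d \<le> \<epsilon> / 2" using Kd by (simp add: algebra_simps)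
  ultimately have "infnorm ((z - u) - f k u) < \<epsilon>" using t1 t2 t3 by linarith
  then show ?thesis using k(1) unfolding u_def by blast
qed

lemma hlim_Int_eq_limit_graphs:
  fixes V :: "nat \<Rightarrow> (real,'n::{finite,linorder}) vec set"
  assumes C: "hlim V C" and s: "strict_mono s" and I: "finite I"
    and U: "open U" "projp p ` U \<subseteq> B" and B: "\<And>u. u \<in> B \<Longrightarrow> projp p u = u" and K: "K \<ge> 0"
    and G: "\<And>n k. k \<in> I \<Longrightarrow> lip_map p K B (G n k)"
      "\<And>n k u. k \<in> I \<Longrightarrow> u \<in> B \<Longrightarrow> u + G n k u \<in> V (s n)"
      "\<And>n. V (s n) \<inter> U \<subseteq> (\<Union>k\<in>I. graph B (G n k))"
    and lim: "\<And>k u. k \<in> I \<Longrightarrow> u \<in> projp p ` U \<Longrightarrow> (\<lambda>n. G n k u) \<longlonglongrightarrow> f k u"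
  shows "C \<inter> U = (\<Union>k\<in>I. graph (projp p ` U) (f k) \<inter> U)"
proof (intro equalityI subsetI)
  fix z assume "z \<in> (\<Union>k\<in>I. graph (projp p ` U) (f k) \<inter> U)"
  then obtain k u where k: "k \<in> I" and u: "u \<in> projp p ` U" and z: "z = u + f k u" "z \<in> U"
    unfolding graph_def by blast
  have "u + G n k u \<in> V (s n)" for n using G(2) k u U(2) by blast
  moreover have "(\<lambda>n. u + G n k u) \<longlonglongrightarrow> z" unfolding z(1) by (intro tendsto_add tendsto_const lim k u)
  ultimately have "z \<in> C" by (rule hlim_limit_mem[OF C s])
  then show "z \<in> C \<inter> U" using z by blast
next
  fix z assume z: "z \<in> C \<inter> U"
  have "(\<lambda>n. G n k (projp p z)) \<longlonglongrightarrow> f k (projp p z)" if "k \<in> I" for k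
    using lim[OF that] z by simp
  then have "\<exists>k\<in>I. infnorm ((z - projp p z) - f k (projp p z)) = 0"
    using hlim_near_limit_sheets[OF C s I U B K G(1,3) _ z] infnorm_pos_le
    by (intro finite_ex_eq_0_if_arbitrarily_small[OF I]) auto
  then obtain k where "k \<in> I" "z - projp p z = f k (projp p z)" by (auto simp: infnorm_eq_0)
  then have "k \<in> I" "z = projp p z + f k (projp p z)" by (metis diff_add_cancel add.commute)+
  then show "z \<in> (\<Union>k\<in>I. graph (projp p ` U) (f k) \<inter> U)" using z unfolding graph_def by blast
qed

lemma compact_flat_cball:
  fixes c :: "(real,'n::{finite,linorder}) vec"
  shows "compact {u. projp p u = u \<and> infnorm (u - c) \<le> r}"
proof -
  let ?c = "sqrt (real CARD('n))" and ?S = "{u. projp p u = u \<and> infnorm (u - c) \<le> r}"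
  have "closed ?S"
    by (intro closed_Collect_conj closed_Collect_eq closed_Collect_le continuous_intros continuous_on_infnorm)
  moreover have "bounded ?S"
  proof (rule boundedI)
    fix u assume "u \<in> ?S"
    have "norm (u - c) \<le> ?c * infnorm (u - c)" by (rule norm_le_sqrt_card_infnorm)
    also have "\<dots> \<le> ?c * r" using \<open>u \<in> ?S\<close> by (intro mult_left_mono) auto
    finally show "norm u \<le> ?c * r + norm c" using norm_triangle_sub[of u c] by linarith
  qed
  ultimately show ?thesis by (simp add: compact_eq_bounded_closed)
qed

lemma limit_of_sheets:
  fixes V :: "nat \<Rightarrow> (real,'n::{finite,linorder}) vec set" and x :: "(real,'n) vec" and \<nu> :: nat
  assumes C: "hlim V C" and K: "K \<ge> 0" and w: "w > 0" and h: "h > 0"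
    and sheets: "\<And>i. N \<le> i \<Longrightarrow> sheet_family p K x w h (V i) \<nu> (G i)"
  obtains f where "\<And>k. k \<in> {1..\<nu>} \<Longrightarrow> lip_map p K (flat_ball p (projp p x) (w / 2)) (f k)"
    "C \<inter> split_box p x (w / 2) (h / 3) =
       (\<Union>k\<in>{1..\<nu>}. graph (flat_ball p (projp p x) (w / 2)) (f k) \<inter> split_box p x (w / 2) (h / 3))"
proof -
  let ?B = "flat_ball p (projp p x) w" and ?U = "split_box p x (w / 2) (h / 3)"
  have G: "\<And>i k. N \<le> i \<Longrightarrow> k \<in> {1..\<nu>} \<Longrightarrow> lip_map p K ?B (G i k)"
      "\<And>i k u. N \<le> i \<Longrightarrow> k \<in> {1..\<nu>} \<Longrightarrow> u \<in> ?B \<Longrightarrow>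
        u + G i k u \<in> V i \<and> infnorm (G i k u - (x - projp p x)) < h"
      "\<And>i. N \<le> i \<Longrightarrow> V i \<inter> ?U \<subseteq> (\<Union>k\<in>{1..\<nu>}. graph ?B (G i k))"
    using sheets unfolding sheet_family_def by blast+
  let ?c = "sqrt (real CARD('n))"
  define cB where "cB = {u. projp p u = u \<and> infnorm (u - projp p x) \<le> w / 2}"
  have cB: "compact cB" unfolding cB_def by (rule compact_flat_cball)
  have sub: "flat_ball p (projp p x) (w / 2) \<subseteq> cB" "cB \<subseteq> ?B" using w by (auto simp: cB_def flat_ball_def)
  have bnd: "norm (G (N + n) k u) \<le> norm (x - projp p x) + ?c * h" if "k \<in> {1..\<nu>}" "u \<in> cB" for n k u
  proof -
    have "norm (G (N + n) k u - (x - projp p x)) \<le> ?c * h"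
      using G(2)[of "N + n" k u] that sub norm_le_sqrt_card_infnorm[of "G (N + n) k u - (x - projp p x)"]
      by (smt (verit) le_add1 mult_left_mono real_sqrt_ge_zero of_nat_0_le_iff subsetD)
    then show ?thesis using norm_triangle_sub[of "G (N + n) k u" "x - projp p x"] by linarith
  qed
  have lip: "(?c * K)-lipschitz_on cB (G (N + n) k)" if "k \<in> {1..\<nu>}" for n k
    using lipschitz_on_subset[OF lip_map_lipschitz_on[OF G(1) K] sub(2)] that by simp
  have "\<exists>f (r :: nat \<Rightarrow> nat). strict_mono r \<and> (\<forall>k\<in>{1..\<nu>}. \<forall>u\<in>cB. (\<lambda>n. G (N + r n) k u) \<longlonglongrightarrow> f k u)"
  proof (rule Arzela_Ascoli_finite_family[where F = "\<lambda>n k. G (N + n) k", OF cB finite_atLeastAtMost])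
    show "norm (G (N + n) k u) \<le> norm (x - projp p x) + ?c * h" if "k \<in> {1..\<nu>}" "u \<in> cB" for n k u
      using bnd that .
    show "(?c * K)-lipschitz_on cB (G (N + n) k)" if "k \<in> {1..\<nu>}" for n k using lip that .
  qed blast
  then obtain f and r :: "nat \<Rightarrow> nat" where r: "strict_mono r"
    and lim: "\<And>k u. k \<in> {1..\<nu>} \<Longrightarrow> u \<in> cB \<Longrightarrow> (\<lambda>n. G (N + r n) k u) \<longlonglongrightarrow> f k u"
    by blast
  have s: "strict_mono (\<lambda>n. N + r n)" using r by (simp add: strict_mono_def)
  have projU: "projp p ` ?U = flat_ball p (projp p x) (w / 2)" using w h by (simp add: projp_split_box)
  show thesis
  proof
    show "lip_map p K (flat_ball p (projp p x) (w / 2)) (f k)" if "k \<in> {1..\<nu>}" for k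
      using lip_map_limit[OF lip_map_subset[OF G(1)] lim] sub that by auto
    have "C \<inter> ?U = (\<Union>k\<in>{1..\<nu>}. graph (projp p ` ?U) (f k) \<inter> ?U)"
    proof (rule hlim_Int_eq_limit_graphs[OF C s finite_atLeastAtMost _ _ _ K])
      show "open ?U" by (simp add: split_box_def open_box)
      show "projp p ` ?U \<subseteq> ?B" using projU sub by simp
      show "projp p u = u" if "u \<in> ?B" for u using that by (simp add: flat_ball_def)
      show "lip_map p K ?B (G (N + r n) k)" if "k \<in> {1..\<nu>}" for n k using G(1) that by simp
      show "u + G (N + r n) k u \<in> V (N + r n)" if "k \<in> {1..\<nu>}" "u \<in> ?B" for n k u
        using G(2) that by simp
      show "V (N + r n) \<inter> ?U \<subseteq> (\<Union>k\<in>{1..\<nu>}. graph ?B (G (N + r n) k))" for n using G(3) by simp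
      show "(\<lambda>n. G (N + r n) k u) \<longlonglongrightarrow> f k u" if "k \<in> {1..\<nu>}" "u \<in> projp p ` ?U" for k u
        using lim that projU sub by blast
    qed
    then show "C \<inter> ?U = (\<Union>k\<in>{1..\<nu>}. graph (flat_ball p (projp p x) (w / 2)) (f k) \<inter> ?U)"
      by (simp add: projU)
  qed
qed

lemma hlim_fr_eventually_compact:
  fixes V :: "nat \<Rightarrow> (real,'n::finite) vec set"
  assumes V: "\<And>i. bounded (V i)" and D: "hlim (\<lambda>i. fr (V i)) D" and x: "x \<notin> D"
  obtains r where "r > 0" "\<forall>\<^sub>F i in sequentially. compact (V i \<inter> {z. infnorm (z - x) \<le> r})"
proof -
  let ?c = "sqrt (real CARD('n))"
  obtain r0 where r0: "r0 > 0" "\<forall>\<^sub>F i in sequentially. fr (V i) \<inter> ball x r0 = {}"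
    using hlim_eventually_far[OF D x] by blast
  define r where "r = r0 / (?c + 1)"
  define Q where "Q = {z. infnorm (z - x) \<le> r}"
  have r: "r > 0" using r0 by (simp add: r_def add_pos_nonneg)
  have "Q \<subseteq> ball x r0"
  proof
    fix z assume "z \<in> Q"
    then have "norm (z - x) \<le> ?c * r"
      using norm_le_sqrt_card_infnorm[of "z - x"] by (simp add: Q_def) (smt (verit) mult_left_mono real_sqrt_ge_zero of_nat_0_le_iff)
    also have "\<dots> = r0 * (?c / (?c + 1))" by (simp add: r_def)
    also have "\<dots> < r0 * 1" using r0 by (intro mult_strict_left_mono) (auto simp: add_pos_nonneg)
    finally show "z \<in> ball x r0" by (simp add: dist_norm norm_minus_commute)
  qed
  moreover have "closed Q" unfolding Q_def by (intro closed_Collect_le continuous_intros continuous_on_infnorm)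
  ultimately have "compact (V i \<inter> Q)" if "fr (V i) \<inter> ball x r0 = {}" for i
    using compact_Int_of_fr_disjoint[OF V] that by blast
  with r0(2) have cpt: "\<forall>\<^sub>F i in sequentially. compact (V i \<inter> Q)" by (rule eventually_mono)
  with r show thesis using that unfolding Q_def by blast
qed

lemma eventually_sheets:
  fixes V :: "nat \<Rightarrow> (real,'n::{finite,linorder}) vec set" and \<nu> :: nat
  assumes \<eta>: "\<eta> \<ge> 0" and V: "\<And>i. bounded (V i) \<and> C1_submanifold p (V i) \<and> eta_bounded p \<eta> (V i)"
    and C: "hlim V C" and D: "hlim (\<lambda>i. fr (V i)) D"
    and comps: "\<And>i a b. box a b \<noteq> {} \<Longrightarrow>
      finite (components (V i \<inter> box a b)) \<and> card (components (V i \<inter> box a b)) \<le> \<nu>"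
    and x: "x \<in> C - D"
  obtains w h N G where "w > 0" "h > 0" "\<And>i. N \<le> i \<Longrightarrow> sheet_family p (real p * \<eta>) x w h (V i) \<nu> (G i)"
proof -
  let ?K = "real p * \<eta>"
  have "bounded (V i)" for i using V by blast
  then obtain r where r: "r > 0" and cpt: "\<forall>\<^sub>F i in sequentially. compact (V i \<inter> {z. infnorm (z - x) \<le> r})"
    using hlim_fr_eventually_compact[OF _ D] x by blast
  define w where "w = r / (12 * ?K + 4)"
  define h where "h = r / 2"
  have K: "?K \<ge> 0" using \<eta> by simp
  have "12 * ?K + 4 \<ge> 1" using K by linarith
  then have w: "w > 0" "w \<le> r" using r divide_left_mono[of 1 "12 * ?K + 4" r] by (auto simp: w_def)
  have h: "h > 0" "h \<le> r" using r by (auto simp: h_def)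
  have wh: "6 * ?K * w < h"
  proof -
    have "6 * ?K * w = r * (6 * ?K / (12 * ?K + 4))" using K by (simp add: w_def)
    also have "\<dots> < r * (1 / 2)" using r K by (intro mult_strict_left_mono) (auto simp: field_simps)
    finally show ?thesis by (simp add: h_def)
  qed
  have "open (split_box p x (w / 2) (h / 3))" by (simp add: split_box_def open_box)
  moreover have "x \<in> split_box p x (w / 2) (h / 3)" using w h by (simp add: centre_in_split_box)
  ultimately obtain e where e: "e > 0" "ball x e \<subseteq> split_box p x (w / 2) (h / 3)"
    using open_contains_ball by blast
  have "V i \<inter> split_box p x (w / 2) (h / 3) \<noteq> {}" if near: "\<exists>a\<in>V i. dist a x < e" for i
  proof -
    obtain a where a: "a \<in> V i" "dist a x < e" using near by blast
    then have "a \<in> ball x e" by (simp add: dist_commute)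
    then show ?thesis using e(2) a(1) by blast
  qed
  with hlim_eventually_near[OF C _ e(1), of x] x
  have ne: "\<forall>\<^sub>F i in sequentially. V i \<inter> split_box p x (w / 2) (h / 3) \<noteq> {}"
    by (simp add: eventually_mono)
  have "split_box p x w h \<noteq> {}" using centre_in_split_box[OF w(1) h(1)] by blast
  then have comps': "finite (components (V i \<inter> split_box p x w h))"
      "card (components (V i \<inter> split_box p x w h)) \<le> \<nu>" for i
    using comps unfolding split_box_def by blast+
  have "\<exists>Gi. sheet_family p ?K x w h (V i) \<nu> Gi"
    if cpt_i: "compact (V i \<inter> {z. infnorm (z - x) \<le> r})" and ne_i: "V i \<inter> split_box p x (w / 2) (h / 3) \<noteq> {}" for i
  proof -
    have Vi: "C1_submanifold p (V i)" "eta_bounded p \<eta> (V i)" using V by auto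
    show ?thesis using C1_submanifold_sheets[OF Vi \<eta> cpt_i w h(2) wh comps' ne_i] by blast
  qed
  with cpt ne have "\<forall>\<^sub>F i in sequentially. \<exists>Gi. sheet_family p ?K x w h (V i) \<nu> Gi" by (rule eventually_elim2)
  then obtain N where "\<forall>i. \<exists>Gi. N \<le> i \<longrightarrow> sheet_family p ?K x w h (V i) \<nu> Gi"
    unfolding eventually_sequentially by blast
  then obtain G where "\<And>i. N \<le> i \<Longrightarrow> sheet_family p ?K x w h (V i) \<nu> (G i)" by (metis choice)
  then show thesis using that[OF w(1) h(1)] by blast
qed

theorem lemma1p6:
  fixes V :: "nat \<Rightarrow> ((real,'n::{finite,linorder}) vec) set"
    and p \<nu> :: nat and \<eta> :: real and C D :: "((real,'n) vec) set"
  assumes "p \<le> CARD('n)" and "\<eta> > 0"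
    and "\<forall>\<iota>. bounded (V \<iota>) \<and> C1_submanifold p (V \<iota>) \<and> eta_bounded p \<eta> (V \<iota>)"
    and "hlim V C" and "hlim (\<lambda>\<iota>. fr (V \<iota>)) D"
    and "\<forall>\<iota> a b. box a b \<noteq> {} \<longrightarrow>
           finite (components (V \<iota> \<inter> box a b)) \<and> card (components (V \<iota> \<inter> box a b)) \<le> \<nu>"
  shows "\<forall>x \<in> C - D. \<exists>a b f. box a b \<noteq> {} \<and> x \<in> box a b \<and>
           (\<forall>k\<in>{1..\<nu>}. lip_map p (real p * \<eta>) (projp p ` box a b) (f k)) \<and>
           C \<inter> box a b = (\<Union>k\<in>{1..\<nu>}. graph (projp p ` box a b) (f k) \<inter> box a b)"
proof
  fix x assume x: "x \<in> C - D"
  have \<eta>: "\<eta> \<ge> 0" using assms(2) by simp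
  obtain w h N G where wh: "w > 0" "h > 0"
    and G: "\<And>i. N \<le> i \<Longrightarrow> sheet_family p (real p * \<eta>) x w h (V i) \<nu> (G i)"
    using eventually_sheets[OF \<eta> assms(3)[rule_format] assms(4,5) assms(6)[rule_format] x] by blast
  obtain f where f: "\<And>k. k \<in> {1..\<nu>} \<Longrightarrow> lip_map p (real p * \<eta>) (flat_ball p (projp p x) (w / 2)) (f k)"
    "C \<inter> split_box p x (w / 2) (h / 3) =
       (\<Union>k\<in>{1..\<nu>}. graph (flat_ball p (projp p x) (w / 2)) (f k) \<inter> split_box p x (w / 2) (h / 3))"
    using limit_of_sheets[OF assms(4) _ wh G] \<eta> by auto
  define v :: "(real,'n) vec" where "v = (\<chi> i. if i \<in> firstp p then w / 2 else h / 3)"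
  have U: "box (x - v) (x + v) = split_box p x (w / 2) (h / 3)" by (simp add: split_box_def v_def)
  moreover have "projp p ` box (x - v) (x + v) = flat_ball p (projp p x) (w / 2)"
    unfolding U by (rule projp_split_box) (use wh in simp_all)
  moreover have "x \<in> box (x - v) (x + v)" unfolding U by (rule centre_in_split_box) (use wh in simp_all)
  ultimately show "\<exists>a b f. box a b \<noteq> {} \<and> x \<in> box a b \<and>
      (\<forall>k\<in>{1..\<nu>}. lip_map p (real p * \<eta>) (projp p ` box a b) (f k)) \<and>
      C \<inter> box a b = (\<Union>k\<in>{1..\<nu>}. graph (projp p ` box a b) (f k) \<inter> box a b)"
    using f by (metis empty_iff)
qed

end
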